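(* Consider a 3-S 3-D MUN-D (as in the context) in which the min-cut between $S_i$ and $T_j$ is at least $1$ for all $i\neq j$. Let $n'$ be a positive integer, $n=2n'+1$, with $p\nmid 2n'+1$; let $m$ be such that $n\mid p^m-1$ and $\alpha\in\mathbb{F}_{p^m}$ of multiplicative order $n$. Regard the LECs $\underline{\varepsilon}$ as indeterminates and let $\hat M_{ij}=\mathrm{diag}\big(M_{ij}(\alpha^0),\dots,M_{ij}(\alpha^{n-1})\big)$ (invertible over $\mathbb{F}_{p^m}(\underline{\varepsilon})$). Put $\hat U=\hat M_{12}^{-1}\hat M_{32}\hat M_{31}^{-1}\hat M_{21}\hat M_{23}^{-1}\hat M_{13}$, $\hat R=\hat M_{13}\hat M_{23}^{-1}$, $\hat S=\hat M_{12}\hat M_{32}^{-1}$, $W=[1\ 1\ \cdots\ 1]^T$ of length $n$, and $V_1=[W\ \hat UW\ \cdots\ \hat U^{n'}W]$ ($n\times(n'+1)$), $V_2=[\hat RW\ \hat R\hat UW\ \cdots\ \hat R\hat U^{n'-1}W]$ ($n\times n'$), $V_3=[\hat S\hat UW\ \hat S\hat U^2W\ \cdots\ \hat S\hat U^{n'}W]$ ($n\times n'$). If $$\mathrm{Rank}[V_1\ \ \hat M_{11}^{-1}\hat M_{21}V_2]=\mathrm{Rank}[\hat M_{12}^{-1}\hat M_{22}V_2\ \ V_1]=\mathrm{Rank}[\hat M_{13}^{-1}\hat M_{33}V_3\ \ V_1]=2n'+1$$ over $\mathbb{F}_{p^m}(\underline{\varepsilon})$, then there is an assignment of values to the LECs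 from a finite extension of $\mathbb{F}_{p^m}$ under which, in the system $Y_j=\sum_{i=1}^3\hat M_{ij}V_iX_i'$ ($j=1,2,3$) with $X_1'$ of length $n'+1$ and $X_2',X_3'$ of length $n'$, each $X_j'$ can be exactly recovered from $Y_j$ (i.e. there is a matrix $G_j$ with $G_jY_j=X_j'$ for all $X_1',X_2',X_3'$).
   Context: A three-source three-destination multiple unicast network with delays (3-S 3-D MUN-D) is a finite directed acyclic graph whose links each carry one symbol of $\mathbb{F}_{p^m}$ per time unit with unit delay, with sources $S_1,S_2,S_3$ each generating one process and destinations $T_1,T_2,T_3$ each with one output, $T_i$ demanding the process of $S_i$; the min-cut between $S_i$ and $T_i$ is $1$. Linear network coding with time-invariant local encoding coefficients (LECs) $\underline{\varepsilon}$ is used (each link symbol at time $t+1$ is an LEC-weighted combination of the source symbol at its tail, if any, and of the incoming link symbols of its tail at time $t$; destination outputs are LEC-weighted combinations of incoming link symbols of the previous time). The transfer function from $S_i$ to $T_j$ is $D^{d'_{min}}M_{ij}(D)$, $M_{ij}(D)=\sum_{d=0}^{d_{max}}M_{ij}^{(d)}D^d$, with $d'_{min}$ the minimum path delay over all pairs and coefficients polynomial in $\underline{\varepsilon}$. Meaning of the model: each source transmits $n>d_{max}$ generations preceded by a cyclic prefix of its last $d_{max}$ generations, after applying a length-$n$ DFT (with parameter $\alpha$) to the precoded block $V_iX_i'$; each destination discards the prefix and applies the inverse DFT, yielding $Y_j=\sum_i\hat M_{ij}V_iX_i'$. *)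

theory Defs
  imports
    "HOL-Library.Poly_Mapping"
    "HOL-Library.Product_Lexorder"
    "HOL-Computational_Algebra.Fraction_Field"
    "HOL-Algebra.Algebraic_Closure_Type"
    "Jordan_Normal_Form.Gauss_Jordan_Elimination"
    "Jordan_Normal_Form.DL_Rank"
begin

text \<open>Edges (links) are natural numbers; vertices have an arbitrary type.
  Sources and destinations are indexed by 1, 2, 3.\<close>

record 'v mun =
  edges :: "nat set"
  etail :: "nat \<Rightarrow> 'v"
  ehead :: "nat \<Rightarrow> 'v"
  src   :: "nat \<Rightarrow> 'v"
  dst   :: "nat \<Rightarrow> 'v"

definition is_path :: "'v mun \<Rightarrow> nat list \<Rightarrow> 'v \<Rightarrow> 'v \<Rightarrow> bool" where
  "is_path N es s t \<longleftrightarrow> es \<noteq> [] \<and> set es \<subseteq> edges N \<and>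
     etail N (hd es) = s \<and> ehead N (last es) = t \<and>
     (\<forall>l. Suc l < length es \<longrightarrow> ehead N (es ! l) = etail N (es ! Suc l))"

definition paths :: "'v mun \<Rightarrow> 'v \<Rightarrow> 'v \<Rightarrow> nat list set" where
  "paths N s t = {es. is_path N es s t}"

definition finite_dag :: "'v mun \<Rightarrow> bool" where
  "finite_dag N \<longleftrightarrow> finite (edges N) \<and> (\<forall>v es. \<not> is_path N es v v)"

definition min_cut :: "'v mun \<Rightarrow> 'v \<Rightarrow> 'v \<Rightarrow> nat" where
  "min_cut N s t = (LEAST k. \<exists>C \<subseteq> edges N. card C = k \<and>
      (\<forall>es. is_path N es s t \<longrightarrow> set es \<inter> C \<noteq> {}))"

text \<open>LEC variables: (0,i,e) weight of the source symbol of S_i on link e (tail e = S_i);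
  (1,e,e') weight of link e on link e' (head e = tail e');
  (2,e,j) weight of link e in the output of T_j (head e = T_j).\<close>
type_synonym lecvar = "nat \<times> nat \<times> nat"

definition src_var :: "nat \<Rightarrow> nat \<Rightarrow> lecvar" where "src_var i e = (0, i, e)"
definition lnk_var :: "nat \<Rightarrow> nat \<Rightarrow> lecvar" where "lnk_var e e' = (1, e, e')"
definition dst_var :: "nat \<Rightarrow> nat \<Rightarrow> lecvar" where "dst_var e j = (2, e, j)"

definition path_gain :: "(lecvar \<Rightarrow> 'k::comm_ring_1) \<Rightarrow> nat \<Rightarrow> nat \<Rightarrow> nat list \<Rightarrow> 'k" where
  "path_gain eps i j es =
     eps (src_var i (hd es)) * (\<Prod>l<length es - 1. eps (lnk_var (es ! l) (es ! Suc l)))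
       * eps (dst_var (last es) j)"

text \<open>Delay of a path of k links from a source symbol to a destination output is k + 1;
  d'_min is the minimum path delay over all source/destination pairs.\<close>
definition dmin :: "'v mun \<Rightarrow> nat" where
  "dmin N = Min {length es + 1 | es i j. i \<in> {1,2,3} \<and> j \<in> {1,2,3} \<and> is_path N es (src N i) (dst N j)}"

text \<open>Evaluation of M_ij(D) = D^(-d'_min) * (transfer function from S_i to T_j) at D = x.\<close>
definition Mval :: "'v mun \<Rightarrow> (lecvar \<Rightarrow> 'k::comm_ring_1) \<Rightarrow> nat \<Rightarrow> nat \<Rightarrow> 'k \<Rightarrow> 'k" where
  "Mval N eps i j x = (\<Sum>es\<in>paths N (src N i) (dst N j).
      path_gain eps i j es * x ^ (length es + 1 - dmin N))"

definition Mhat :: "'v mun \<Rightarrow> (lecvar \<Rightarrow> 'k::comm_ring_1) \<Rightarrow> 'k \<Rightarrow> nat \<Rightarrow> nat \<Rightarrow> nat \<Rightarrow> 'k mat" where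
  "Mhat N eps a n i j = mat n n (\<lambda>(r, c). if r = c then Mval N eps i j (a ^ r) else 0)"

definition minv :: "'k::field mat \<Rightarrow> 'k mat" where
  "minv A = the (mat_inverse A)"

definition Uhat :: "'v mun \<Rightarrow> (lecvar \<Rightarrow> 'k::field) \<Rightarrow> 'k \<Rightarrow> nat \<Rightarrow> 'k mat" where
  "Uhat N eps a n = minv (Mhat N eps a n 1 2) * Mhat N eps a n 3 2 * minv (Mhat N eps a n 3 1)
      * Mhat N eps a n 2 1 * minv (Mhat N eps a n 2 3) * Mhat N eps a n 1 3"

definition Rhat :: "'v mun \<Rightarrow> (lecvar \<Rightarrow> 'k::field) \<Rightarrow> 'k \<Rightarrow> nat \<Rightarrow> 'k mat" where
  "Rhat N eps a n = Mhat N eps a n 1 3 * minv (Mhat N eps a n 2 3)"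

definition Shat :: "'v mun \<Rightarrow> (lecvar \<Rightarrow> 'k::field) \<Rightarrow> 'k \<Rightarrow> nat \<Rightarrow> 'k mat" where
  "Shat N eps a n = Mhat N eps a n 1 2 * minv (Mhat N eps a n 3 2)"

definition Wvec :: "nat \<Rightarrow> 'k::field vec" where
  "Wvec n = vec n (\<lambda>_. 1)"

definition V1 :: "'v mun \<Rightarrow> (lecvar \<Rightarrow> 'k::field) \<Rightarrow> 'k \<Rightarrow> nat \<Rightarrow> 'k mat" where
  "V1 N eps a n' = (let n = 2 * n' + 1 in
     mat_of_cols n [(Uhat N eps a n ^\<^sub>m k) *\<^sub>v Wvec n. k \<leftarrow> [0..<n' + 1]])"

definition V2 :: "'v mun \<Rightarrow> (lecvar \<Rightarrow> 'k::field) \<Rightarrow> 'k \<Rightarrow> nat \<Rightarrow> 'k mat" where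
  "V2 N eps a n' = (let n = 2 * n' + 1 in
     mat_of_cols n [Rhat N eps a n *\<^sub>v ((Uhat N eps a n ^\<^sub>m k) *\<^sub>v Wvec n). k \<leftarrow> [0..<n']])"

definition V3 :: "'v mun \<Rightarrow> (lecvar \<Rightarrow> 'k::field) \<Rightarrow> 'k \<Rightarrow> nat \<Rightarrow> 'k mat" where
  "V3 N eps a n' = (let n = 2 * n' + 1 in
     mat_of_cols n [Shat N eps a n *\<^sub>v ((Uhat N eps a n ^\<^sub>m (k + 1)) *\<^sub>v Wvec n). k \<leftarrow> [0..<n']])"

definition hcat :: "nat \<Rightarrow> 'k mat \<Rightarrow> 'k mat \<Rightarrow> 'k mat" where
  "hcat n A B = mat_of_cols n (cols A @ cols B)"

definition Yout :: "'v mun \<Rightarrow> (lecvar \<Rightarrow> 'k::field) \<Rightarrow> 'k \<Rightarrow> nat \<Rightarrow> nat \<Rightarrow> (nat \<Rightarrow> 'k vec) \<Rightarrow> 'k vec" where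
  "Yout N eps a n' j xs = (let n = 2 * n' + 1 in
      Mhat N eps a n 1 j *\<^sub>v (V1 N eps a n' *\<^sub>v xs 1)
    + Mhat N eps a n 2 j *\<^sub>v (V2 N eps a n' *\<^sub>v xs 2)
    + Mhat N eps a n 3 j *\<^sub>v (V3 N eps a n' *\<^sub>v xs 3))"

definition xlen :: "nat \<Rightarrow> nat \<Rightarrow> nat" where
  "xlen n' i = (if i = 1 then n' + 1 else n')"

type_synonym 'f ratfun = "((lecvar \<Rightarrow>\<^sub>0 nat) \<Rightarrow>\<^sub>0 'f) fract"

definition lec_indet :: "lecvar \<Rightarrow> 'f::field ratfun" where
  "lec_indet v = Fract (Poly_Mapping.single (Poly_Mapping.single v 1) 1) 1"

definition rconst :: "'f::field \<Rightarrow> 'f ratfun" where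
  "rconst c = Fract (Poly_Mapping.single 0 c) 1"

end

theory Submission
  imports Defs
begin

text \<open>
  Regard the LECs as indeterminates. Every coefficient M_ij(\<alpha>^r) is then a nonzero polynomial:
  a path from S_i to T_j exists, and distinct paths contribute distinct monomials. So the diagonal
  matrices of these coefficients are invertible and the precoders are defined. They are built so
  that at every destination the signals of the two other sources fall into one common subspace:
  M_31 V_3 = M_21 V_2 at T_1, while at T_2 and T_3 the signals of S_3 and S_2 fall into the span
  of M_1j V_1. Hence the block received at T_j is M_1j H_j applied to X_j' stacked on the aligned
  interference, where H_j is the matrix of the j-th rank condition, so det H_j \<noteq> 0.

  The numerators and denominators of the three determinants and all coefficients M_ij(\<alpha>^r)
  are finitely many nonzero polynomials, so they have a common non-root in the infinite algebraic
  closure. Evaluation there respects the field operations that build H_j, so the specialized H_j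
  stay invertible, and X_j' is read off from the first rows of the inverse of M_1j H_j.
\<close>


section \<open>Evaluation of multivariate polynomials\<close>

type_synonym ('v, 'f) mpoly = "('v \<Rightarrow>\<^sub>0 nat) \<Rightarrow>\<^sub>0 'f"

definition monom_eval :: "('v \<Rightarrow> 'a::comm_semiring_1) \<Rightarrow> ('v \<Rightarrow>\<^sub>0 nat) \<Rightarrow> 'a" where
  "monom_eval e m = (\<Prod>v\<in>Poly_Mapping.keys m. e v ^ Poly_Mapping.lookup m v)"

lemma monom_eval_superset:
  assumes "finite S" "Poly_Mapping.keys m \<subseteq> S"
  shows "monom_eval e m = (\<Prod>v\<in>S. e v ^ Poly_Mapping.lookup m v)"
  unfolding monom_eval_def using assms
  by (intro prod.mono_neutral_left) (auto simp: in_keys_iff)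

lemma monom_eval_zero [simp]: "monom_eval e 0 = 1"
  by (simp add: monom_eval_def)

lemma monom_eval_single [simp]: "monom_eval e (Poly_Mapping.single v k) = e v ^ k"
  by (cases "k = 0") (auto simp: monom_eval_def)

lemma monom_eval_add: "monom_eval e (m1 + m2) = monom_eval e m1 * monom_eval e m2"
proof -
  let ?S = "Poly_Mapping.keys m1 \<union> Poly_Mapping.keys m2"
  have "monom_eval e (m1 + m2) = (\<Prod>v\<in>?S. e v ^ Poly_Mapping.lookup m1 v * e v ^ Poly_Mapping.lookup m2 v)"
    by (simp add: monom_eval_superset[OF _ keys_add] lookup_add power_add)
  also have "\<dots> = monom_eval e m1 * monom_eval e m2"
    by (simp add: prod.distrib monom_eval_superset[of ?S m1] monom_eval_superset[of ?S m2])
  finally show ?thesis .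
qed

lemma monom_eval_sum: "monom_eval e (\<Sum>l\<in>L. f l) = (\<Prod>l\<in>L. monom_eval e (f l))"
  by (induction L rule: infinite_finite_induct) (auto simp: monom_eval_add)

lemma monom_eval_fun_upd:
  "x \<notin> Poly_Mapping.keys m \<Longrightarrow> monom_eval (e(x := t)) m = monom_eval e m"
  unfolding monom_eval_def by (intro prod.cong) auto

lemma monom_eval_split_var:
  "monom_eval e m = e x ^ Poly_Mapping.lookup m x * monom_eval e (Poly_Mapping.update x 0 m)"
proof (cases "x \<in> Poly_Mapping.keys m")
  case True
  have "monom_eval e (Poly_Mapping.update x 0 m)
        = (\<Prod>v\<in>Poly_Mapping.keys m - {x}. e v ^ Poly_Mapping.lookup m v)"
    unfolding monom_eval_def by (intro prod.cong) (auto simp: keys_update lookup_update)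
  then show ?thesis
    unfolding monom_eval_def by (simp add: prod.remove[OF finite_keys True])
next
  case False
  then have "Poly_Mapping.update x 0 m = m"
    by (intro poly_mapping_eqI) (auto simp: lookup_update in_keys_iff)
  then show ?thesis using False by (simp add: in_keys_iff)
qed

lemma poly_mapping_eq_by_update:
  assumes "Poly_Mapping.lookup m x = Poly_Mapping.lookup m' x"
    and "Poly_Mapping.update x 0 m = Poly_Mapping.update x 0 m'"
  shows "m = m'"
proof (rule poly_mapping_eqI)
  fix v
  show "Poly_Mapping.lookup m v = Poly_Mapping.lookup m' v"
  proof (cases "v = x")
    case False
    then show ?thesis
      using arg_cong[OF assms(2), of "\<lambda>p. Poly_Mapping.lookup p v"] by (simp add: lookup_update)
  qed (use assms in simp)
qed

lemma exists_nonroot_finite_sum: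
  fixes a :: "nat \<Rightarrow> 'a::field"
  assumes "infinite (UNIV :: 'a set)" "finite K" "k0 \<in> K" "a k0 \<noteq> 0"
  shows "\<exists>t. (\<Sum>k\<in>K. t ^ k * a k) \<noteq> 0"
proof -
  define Q where "Q = (\<Sum>k\<in>K. monom (a k) k)"
  have "coeff Q k0 = a k0"
    unfolding Q_def coeff_sum using assms(2,3) by (simp add: sum.delta)
  then have "finite {t. poly Q t = 0}"
    using assms(4) by (intro poly_roots_finite) auto
  then obtain t where "poly Q t \<noteq> 0"
    using ex_new_if_finite[OF assms(1)] by blast
  then show ?thesis
    unfolding Q_def poly_sum by (auto simp: poly_monom mult.commute)
qed

lemma monom_eval_sum_group_by_var:
  assumes "finite I"
  shows "(\<Sum>i\<in>I. c i * monom_eval e (g i)) =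
    (\<Sum>k\<in>(\<lambda>i. Poly_Mapping.lookup (g i) x) ` I. e x ^ k *
       (\<Sum>i\<in>{i\<in>I. Poly_Mapping.lookup (g i) x = k}. c i * monom_eval e (Poly_Mapping.update x 0 (g i))))"
proof -
  have "(\<Sum>i\<in>I. c i * monom_eval e (g i)) = (\<Sum>k\<in>(\<lambda>i. Poly_Mapping.lookup (g i) x) ` I.
      \<Sum>i\<in>{i\<in>I. Poly_Mapping.lookup (g i) x = k}. c i * monom_eval e (g i))"
    by (rule sum.image_gen[OF assms])
  also have "\<dots> = (\<Sum>k\<in>(\<lambda>i. Poly_Mapping.lookup (g i) x) ` I. e x ^ k *
      (\<Sum>i\<in>{i\<in>I. Poly_Mapping.lookup (g i) x = k}. c i * monom_eval e (Poly_Mapping.update x 0 (g i))))"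
    unfolding sum_distrib_left
  proof (intro sum.cong refl)
    fix k i assume "i \<in> {i\<in>I. Poly_Mapping.lookup (g i) x = k}"
    then show "c i * monom_eval e (g i) = e x ^ k * (c i * monom_eval e (Poly_Mapping.update x 0 (g i)))"
      using monom_eval_split_var[of e "g i" x] by (simp add: mult_ac)
  qed
  finally show ?thesis .
qed

text \<open>Induction on the variables: grouping by the powers of one variable x gives a polynomial in x
  one of whose coefficients is, by induction, nonzero at some point.\<close>

lemma monom_sum_nonvanishing:
  fixes g :: "'i \<Rightarrow> ('v \<Rightarrow>\<^sub>0 nat)" and c :: "'i \<Rightarrow> 'a::field"
  assumes "infinite (UNIV :: 'a set)" "finite VS" "finite I"
    and "\<forall>i\<in>I. Poly_Mapping.keys (g i) \<subseteq> VS"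
    and "(\<Sum>i\<in>{i\<in>I. g i = m}. c i) \<noteq> 0"
  shows "\<exists>e. (\<Sum>i\<in>I. c i * monom_eval e (g i)) \<noteq> 0"
  using assms(2-)
proof (induction VS arbitrary: I g m rule: finite_induct)
  case empty
  then have g0: "\<forall>i\<in>I. g i = 0" by auto
  show ?case
  proof (cases "m = 0")
    case True
    then have "{i\<in>I. g i = m} = I" using g0 by auto
    then show ?thesis using empty.prems(3) g0 by simp
  next
    case False
    then have "{i\<in>I. g i = m} = {}" using g0 by auto
    then show ?thesis using empty.prems(3) by (simp only: sum.empty) simp
  qed
next
  case (insert x VS)
  define upd where "upd m = Poly_Mapping.update x 0 m" for m :: "'v \<Rightarrow>\<^sub>0 nat"
  define K where "K = (\<lambda>i. Poly_Mapping.lookup (g i) x) ` I"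
  define A where "A e k = (\<Sum>i\<in>{i\<in>I. Poly_Mapping.lookup (g i) x = k}. c i * monom_eval e (upd (g i)))"
    for e k
  have grouped: "(\<Sum>i\<in>I. c i * monom_eval e (g i)) = (\<Sum>k\<in>K. e x ^ k * A e k)" for e
    unfolding K_def A_def upd_def by (rule monom_eval_sum_group_by_var[OF insert.prems(1)])
  have keys_upd: "Poly_Mapping.keys (upd (g i)) \<subseteq> VS" if "i \<in> I" for i
    using insert.prems(2) that by (auto simp: upd_def keys_update)
  have A_fun_upd: "A (e(x := t)) k = A e k" for e t k
    unfolding A_def
  proof (intro sum.cong refl)
    fix i assume "i \<in> {i\<in>I. Poly_Mapping.lookup (g i) x = k}"
    then have "x \<notin> Poly_Mapping.keys (upd (g i))" using keys_upd insert.hyps(2) by auto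
    then show "c i * monom_eval (e(x := t)) (upd (g i)) = c i * monom_eval e (upd (g i))"
      by (simp add: monom_eval_fun_upd)
  qed
  define k0 where "k0 = Poly_Mapping.lookup m x"
  define I0 where "I0 = {i\<in>I. Poly_Mapping.lookup (g i) x = k0}"
  have "{i\<in>I0. upd (g i) = upd m} = {i\<in>I. g i = m}"
    using poly_mapping_eq_by_update[of _ x m] by (auto simp: I0_def upd_def k0_def)
  then have "\<exists>e. (\<Sum>i\<in>I0. c i * monom_eval e (upd (g i))) \<noteq> 0"
    using insert.prems(1,3) keys_upd
    by (intro insert.IH[where m = "upd m"]) (auto simp: I0_def)
  then obtain e0 where e0: "A e0 k0 \<noteq> 0" unfolding A_def I0_def by blast
  then have "{i\<in>I. Poly_Mapping.lookup (g i) x = k0} \<noteq> {}" unfolding A_def by (metis sum.empty)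
  then have "k0 \<in> K" unfolding K_def by blast
  moreover have "finite K" using insert.prems(1) by (simp add: K_def)
  ultimately obtain t where "(\<Sum>k\<in>K. t ^ k * A e0 k) \<noteq> 0"
    using exists_nonroot_finite_sum[OF assms(1)] e0 by blast
  then have "(\<Sum>i\<in>I. c i * monom_eval (e0(x := t)) (g i)) \<noteq> 0"
    by (simp add: grouped A_fun_upd)
  then show ?case by blast
qed

definition mpoly_eval :: "('v \<Rightarrow> 'f::field alg_closure) \<Rightarrow> ('v, 'f) mpoly \<Rightarrow> 'f alg_closure" where
  "mpoly_eval e p = (\<Sum>m\<in>Poly_Mapping.keys p. to_ac (Poly_Mapping.lookup p m) * monom_eval e m)"

lemma mpoly_eval_superset:
  assumes "finite S" "Poly_Mapping.keys p \<subseteq> S"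
  shows "mpoly_eval e p = (\<Sum>m\<in>S. to_ac (Poly_Mapping.lookup p m) * monom_eval e m)"
  unfolding mpoly_eval_def using assms
  by (intro sum.mono_neutral_left) (auto simp: in_keys_iff)

lemma mpoly_eval_add: "mpoly_eval e (p + q) = mpoly_eval e p + mpoly_eval e q"
proof -
  let ?S = "Poly_Mapping.keys p \<union> Poly_Mapping.keys q"
  show ?thesis
    by (simp add: mpoly_eval_superset[OF _ keys_add] mpoly_eval_superset[of ?S p]
        mpoly_eval_superset[of ?S q] lookup_add distrib_right sum.distrib)
qed

lemma mpoly_eval_single [simp]: "mpoly_eval e (Poly_Mapping.single m c) = to_ac c * monom_eval e m"
  by (cases "c = 0") (auto simp: mpoly_eval_def)

lemma update_eq_add_single:
  "a \<notin> Poly_Mapping.keys f \<Longrightarrow> Poly_Mapping.update a b f = f + Poly_Mapping.single a b"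
  by (rule poly_mapping_eqI) (auto simp: lookup_update lookup_add lookup_single in_keys_iff when_def)

lemma mpoly_eval_single_mult:
  "mpoly_eval e (Poly_Mapping.single m c * q) = to_ac c * monom_eval e m * mpoly_eval e q"
proof (induction q rule: update_induct)
  case const
  then show ?case by (simp add: mpoly_eval_def)
next
  case (update a b f)
  then show ?case
    by (simp add: update_eq_add_single distrib_left mpoly_eval_add mult_single monom_eval_add
        algebra_simps)
qed

lemma mpoly_eval_mult: "mpoly_eval e (p * q) = mpoly_eval e p * mpoly_eval e q"
proof (induction p rule: update_induct)
  case const
  then show ?case by (simp add: mpoly_eval_def)
next
  case (update a b f)
  then show ?case
    by (simp add: update_eq_add_single distrib_right mpoly_eval_add mpoly_eval_single_mult)
qed

lemma mpoly_eval_zero: "mpoly_eval e 0 = 0"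
  by (simp add: mpoly_eval_def)

lemma mpoly_eval_one: "mpoly_eval e 1 = 1"
  by (simp add: mpoly_eval_def)

interpretation mpoly_eval_hom: comm_ring_hom "mpoly_eval e"
  by unfold_locales (simp_all add: mpoly_eval_add mpoly_eval_mult mpoly_eval_zero mpoly_eval_one)

lemma infinite_UNIV_alg_closed: "infinite (UNIV :: 'a::alg_closed_field set)"
proof
  assume fin: "finite (UNIV :: 'a set)"
  define Q :: "'a poly" where "Q = (\<Prod>a\<in>UNIV. [:-a, 1:]) + 1"
  have "card {0, 1 :: 'a} \<le> card (UNIV :: 'a set)"
    using fin by (intro card_mono) auto
  then have "degree Q = card (UNIV :: 'a set)" "card (UNIV :: 'a set) > 0"
    unfolding Q_def by (auto simp: degree_add_eq_left degree_prod_eq_sum_degree)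
  then obtain x where "poly Q x = 0" using alg_closed_imp_poly_has_root by force
  moreover have "poly (\<Prod>a\<in>UNIV. [:-a, 1:]) x = 0"
    using fin by (simp add: poly_prod)
  ultimately show False by (simp add: Q_def)
qed

lemma mpoly_eval_nonzero_somewhere:
  fixes P :: "('v, 'f::field) mpoly"
  assumes "P \<noteq> 0"
  shows "\<exists>e. mpoly_eval e P \<noteq> 0"
proof -
  obtain mon where mon: "mon \<in> Poly_Mapping.keys P"
    using assms by (metis lookup_zero poly_mapping_eqI in_keys_iff)
  have "\<exists>e :: 'v \<Rightarrow> 'f alg_closure.
          (\<Sum>m\<in>Poly_Mapping.keys P. to_ac (Poly_Mapping.lookup P m) * monom_eval e (id m)) \<noteq> 0"
  proof (rule monom_sum_nonvanishing[OF infinite_UNIV_alg_closed,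
      where m = mon and VS = "\<Union>m\<in>Poly_Mapping.keys P. Poly_Mapping.keys m"])
    have "{m\<in>Poly_Mapping.keys P. id m = mon} = {mon}" using mon by auto
    then show "(\<Sum>m\<in>{m\<in>Poly_Mapping.keys P. id m = mon}. to_ac (Poly_Mapping.lookup P m)) \<noteq> 0"
      using mon by (simp add: in_keys_iff)
  qed auto
  then show ?thesis unfolding mpoly_eval_def by simp
qed

lemma exists_common_nonroot:
  fixes P :: "('v::linorder, 'f::field) mpoly set"
  assumes "finite P" "0 \<notin> P"
  shows "\<exists>e. \<forall>p\<in>P. mpoly_eval e p \<noteq> 0"
proof -
  have "\<Prod>P \<noteq> 0" using assms by simp
  then obtain e where "mpoly_eval e (\<Prod>P) \<noteq> 0"
    using mpoly_eval_nonzero_somewhere by blast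
  then show ?thesis
    using assms(1) by (auto simp: mpoly_eval_hom.hom_prod prod_zero_iff)
qed

section \<open>Concatenated and diagonal matrices\<close>

lemma hcat_carrier:
  assumes "A \<in> carrier_mat n p" "B \<in> carrier_mat n q"
  shows "hcat n A B \<in> carrier_mat n (p + q)"
  using assms mat_of_cols_carrier(1)[of n "cols A @ cols B"] by (simp add: hcat_def)

lemma hcat_index:
  assumes "A \<in> carrier_mat n p" "B \<in> carrier_mat n q" "r < n" "c < p + q"
  shows "hcat n A B $$ (r, c) = (if c < p then A $$ (r, c) else B $$ (r, c - p))"
  using assms unfolding hcat_def by (simp add: mat_of_cols_index nth_append)

lemma hcat_mult_append_vec:
  assumes A: "A \<in> carrier_mat n p" and B: "B \<in> carrier_mat n q"
    and x: "x \<in> carrier_vec p" and y: "y \<in> carrier_vec q"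
  shows "hcat n A B *\<^sub>v (x @\<^sub>v y) = A *\<^sub>v x + B *\<^sub>v y"
proof (rule eq_vecI)
  fix r assume "r < dim_vec (A *\<^sub>v x + B *\<^sub>v y)"
  then have r: "r < n" using B by simp
  let ?f = "\<lambda>c. hcat n A B $$ (r, c) * (x @\<^sub>v y) $ c"
  have "(hcat n A B *\<^sub>v (x @\<^sub>v y)) $ r = (\<Sum>c = 0..<p + q. ?f c)"
    using hcat_carrier[OF A B] r x y by (simp add: scalar_prod_def)
  also have "\<dots> = (\<Sum>c = 0..<p. ?f c) + (\<Sum>c = p..<p + q. ?f c)"
    by (rule sum.atLeastLessThan_concat[symmetric]) auto
  also have "\<dots> = (\<Sum>c = 0..<p. ?f c) + (\<Sum>c = 0..<q. ?f (c + p))"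
    using sum.shift_bounds_nat_ivl[of ?f 0 p q] by (simp add: add.commute)
  also have "\<dots> = (\<Sum>c = 0..<p. A $$ (r, c) * x $ c) + (\<Sum>c = 0..<q. B $$ (r, c) * y $ c)"
    using hcat_index[OF A B r] x y by (intro arg_cong2[where f = "(+)"] sum.cong) auto
  also have "\<dots> = (A *\<^sub>v x + B *\<^sub>v y) $ r"
    using A B x y r by (simp add: scalar_prod_def)
  finally show "(hcat n A B *\<^sub>v (x @\<^sub>v y)) $ r = (A *\<^sub>v x + B *\<^sub>v y) $ r" .
qed (use hcat_carrier[OF A B] B in simp)

lemma mat_diag_cong: "(\<And>r. r < n \<Longrightarrow> f r = g r) \<Longrightarrow> mat_diag n f = mat_diag n g"
  by (auto simp: mat_diag_def intro!: eq_matI)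

lemma dim_mat_diag [simp]: "dim_row (mat_diag n f) = n" "dim_col (mat_diag n f) = n"
  by (simp_all add: mat_diag_def)

lemma mat_diag_pow: "mat_diag n f ^\<^sub>m k = mat_diag n (\<lambda>r. f r ^ k)"
  by (induction k) (simp_all add: power_commutes)

lemma mat_diag_mult_vec:
  assumes "v \<in> carrier_vec n"
  shows "mat_diag n f *\<^sub>v v = vec n (\<lambda>r. f r * v $ r)"
proof (rule eq_vecI)
  fix r assume "r < dim_vec (vec n (\<lambda>r. f r * v $ r))"
  then have r: "r < n" by simp
  then have "(mat_diag n f *\<^sub>v v) $ r = (\<Sum>i = 0..<n. (if r = i then f i else 0) * v $ i)"
    using assms by (simp add: mat_diag_def scalar_prod_def)
  also have "\<dots> = (\<Sum>i = 0..<n. if r = i then f i * v $ i else 0)"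
    by (rule sum.cong) simp_all
  finally show "(mat_diag n f *\<^sub>v v) $ r = vec n (\<lambda>r. f r * v $ r) $ r" using r by simp
qed simp

lemma mat_diag_mult_inverse:
  fixes f :: "nat \<Rightarrow> 'k::field"
  assumes "\<forall>r<n. f r \<noteq> 0"
  shows "mat_diag n f * mat_diag n (\<lambda>r. inverse (f r)) = 1\<^sub>m n"
    and "mat_diag n (\<lambda>r. inverse (f r)) * mat_diag n f = 1\<^sub>m n"
proof -
  have "mat_diag n (\<lambda>r. f r * inverse (f r)) = mat_diag n (\<lambda>_. 1)"
    "mat_diag n (\<lambda>r. inverse (f r) * f r) = mat_diag n (\<lambda>_. 1)"
    by (rule mat_diag_cong, use assms in simp)+
  then show "mat_diag n f * mat_diag n (\<lambda>r. inverse (f r)) = 1\<^sub>m n"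
    "mat_diag n (\<lambda>r. inverse (f r)) * mat_diag n f = 1\<^sub>m n"
    by simp_all
qed

lemma minv_mat_diag:
  fixes f :: "nat \<Rightarrow> 'k::field"
  assumes nz: "\<forall>r<n. f r \<noteq> 0"
  shows "minv (mat_diag n f) = mat_diag n (\<lambda>r. inverse (f r))"
proof (cases "mat_inverse (mat_diag n f)")
  case None
  have "mat_diag n f \<notin> Units (ring_mat TYPE('k) n ())"
    by (rule mat_inverse(1)[OF mat_diag_dim None])
  moreover have "mat_diag n f \<in> Units (ring_mat TYPE('k) n ())"
    using mat_diag_mult_inverse[OF nz] unfolding Units_def ring_mat_def
    by (auto intro!: bexI[of _ "mat_diag n (\<lambda>r. inverse (f r))"])
  ultimately show ?thesis by blast
next
  case (Some B)
  then have B: "mat_diag n f * B = 1\<^sub>m n" "B \<in> carrier_mat n n"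
    using mat_inverse(2)[OF mat_diag_dim] by auto
  let ?I = "mat_diag n (\<lambda>r. inverse (f r))"
  have "B = (?I * mat_diag n f) * B"
    by (simp only: mat_diag_mult_inverse(2)[OF nz] left_mult_one_mat[OF B(2)])
  also have "\<dots> = ?I * (mat_diag n f * B)"
    by (rule assoc_mult_mat[OF mat_diag_dim mat_diag_dim B(2)])
  also have "\<dots> = ?I" using B by (simp add: right_mult_one_mat[OF mat_diag_dim])
  finally show ?thesis using Some by (simp add: minv_def)
qed

lemma invertible_mat_diag:
  fixes f :: "nat \<Rightarrow> 'k::field"
  assumes "\<forall>r<n. f r \<noteq> 0"
  shows "invertible_mat (mat_diag n f)"
  unfolding invertible_mat_def inverts_mat_def using mat_diag_mult_inverse[OF assms]
  by (auto simp: square_mat.simps mat_diag_def)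

lemma det_mat_diag: "det (mat_diag n f) = (\<Prod>r<n. f r)"
proof -
  have "upper_triangular (mat_diag n f)" by (auto simp: upper_triangular_def mat_diag_def)
  moreover have "diag_mat (mat_diag n f) = map f [0..<n]"
    by (auto simp: diag_mat_def mat_diag_def)
  ultimately show ?thesis
    by (simp add: det_upper_triangular[OF _ mat_diag_dim] prod.distinct_set_conv_list[symmetric]
        atLeast0LessThan)
qed

definition window_mat :: "nat \<Rightarrow> nat \<Rightarrow> nat \<Rightarrow> 'k::semiring_1 mat" where
  "window_mat m k s = mat m k (\<lambda>(i, l). if i = l + s then 1 else 0)"

lemma window_mat_carrier: "window_mat m k s \<in> carrier_mat m k"
  by (simp add: window_mat_def)

lemma dim_window_mat [simp]: "dim_row (window_mat m k s) = m" "dim_col (window_mat m k s) = k"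
  by (simp_all add: window_mat_def)

lemma mult_window_mat:
  assumes "dim_col A = m" "k + s \<le> m"
  shows "A * window_mat m k s = mat (dim_row A) k (\<lambda>(r, l). A $$ (r, l + s))"
proof (rule eq_matI)
  fix r l assume "r < dim_row (mat (dim_row A) k (\<lambda>(r, l). A $$ (r, l + s)))"
    "l < dim_col (mat (dim_row A) k (\<lambda>(r, l). A $$ (r, l + s)))"
  then have rl: "r < dim_row A" "l < k" "l + s < m" using assms(2) by auto
  then have "(A * window_mat m k s) $$ (r, l)
      = (\<Sum>i = 0..<m. A $$ (r, i) * (if i = l + s then 1 else 0))"
    using assms(1) by (simp add: window_mat_def scalar_prod_def)
  also have "\<dots> = (\<Sum>i = 0..<m. if i = l + s then A $$ (r, i) else 0)"
    by (rule sum.cong) simp_all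
  also have "\<dots> = A $$ (r, l + s)" using rl by (simp add: sum.delta)
  finally show "(A * window_mat m k s) $$ (r, l) = mat (dim_row A) k (\<lambda>(r, l). A $$ (r, l + s)) $$ (r, l)"
    using rl by simp
qed (simp_all add: window_mat_def)

lemma prefix_recovery:
  fixes A :: "'k::field mat"
  assumes "A \<in> carrier_mat n n" "det A \<noteq> 0" "p + q = n"
  shows "\<exists>G. G \<in> carrier_mat p n \<and>
    (\<forall>x y. x \<in> carrier_vec p \<longrightarrow> y \<in> carrier_vec q \<longrightarrow> G *\<^sub>v (A *\<^sub>v (x @\<^sub>v y)) = x)"
proof -
  obtain B where B: "B \<in> carrier_mat n n" "B * A = 1\<^sub>m n"
    using det_non_zero_imp_unit[OF assms(1,2)] unfolding Units_def ring_mat_def by auto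
  define G where "G = mat p n (\<lambda>(i, j). B $$ (i, j))"
  have "G *\<^sub>v (A *\<^sub>v (x @\<^sub>v y)) = x" if x: "x \<in> carrier_vec p" and y: "y \<in> carrier_vec q" for x y
  proof (rule eq_vecI)
    have xy: "x @\<^sub>v y \<in> carrier_vec n" using x y assms(3) by auto
    fix i assume "i < dim_vec x"
    then have i: "i < p" using x by simp
    have "(G *\<^sub>v (A *\<^sub>v (x @\<^sub>v y))) $ i = (B *\<^sub>v (A *\<^sub>v (x @\<^sub>v y))) $ i"
      using i assms(1,3) B(1) xy by (simp add: G_def scalar_prod_def)
    also have "\<dots> = (x @\<^sub>v y) $ i"
      using B assms(1) xy by (simp add: assoc_mult_mat_vec[symmetric, of B n n A n])
    finally show "(G *\<^sub>v (A *\<^sub>v (x @\<^sub>v y))) $ i = x $ i" using i x by simp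
  qed (use that in \<open>simp add: G_def\<close>)
  moreover have "G \<in> carrier_mat p n" by (simp add: G_def)
  ultimately show ?thesis by blast
qed

lemma add_vec_permute:
  fixes u v w :: "'a::ab_semigroup_add vec"
  assumes "u \<in> carrier_vec n" "v \<in> carrier_vec n" "w \<in> carrier_vec n"
  shows "u + v + w = v + u + w" "u + v + w = w + u + v"
  using assms by (auto intro!: eq_vecI simp: ac_simps)

text \<open>Interference alignment in matrix form: at a destination the signals of the sources
  s, t, u arrive through D_s A_s, D_t A_t, D_u A_u, and the last one has been aligned into
  the column space of the second, D_u A_u = D_t A_t S.\<close>

lemma aligned_interference:
  assumes carriers: "F \<in> carrier_mat n n" "Ds \<in> carrier_mat n n" "Dt \<in> carrier_mat n n"
      "Du \<in> carrier_mat n n" "As \<in> carrier_mat n p" "At \<in> carrier_mat n q" "Au \<in> carrier_mat n q'"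
      "S \<in> carrier_mat q q'" "Bs \<in> carrier_mat n p" "Bt \<in> carrier_mat n q"
    and eqs: "F * Bs = Ds * As" "F * Bt = Dt * At" "Du * Au = Dt * (At * S)"
    and vecs: "xs \<in> carrier_vec p" "xt \<in> carrier_vec q" "xu \<in> carrier_vec q'"
  shows "Ds *\<^sub>v (As *\<^sub>v xs) + Dt *\<^sub>v (At *\<^sub>v xt) + Du *\<^sub>v (Au *\<^sub>v xu)
       = F *\<^sub>v (hcat n Bs Bt *\<^sub>v (xs @\<^sub>v (xt + S *\<^sub>v xu)))"
proof -
  have Sxu: "S *\<^sub>v xu \<in> carrier_vec q" using carriers vecs by simp
  have s: "F *\<^sub>v (Bs *\<^sub>v xs) = Ds *\<^sub>v (As *\<^sub>v xs)"
    using arg_cong[OF eqs(1), of "\<lambda>M. M *\<^sub>v xs"] carriers vecs by simp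
  have t: "F *\<^sub>v (Bt *\<^sub>v v) = Dt *\<^sub>v (At *\<^sub>v v)" if "v \<in> carrier_vec q" for v
    using arg_cong[OF eqs(2), of "\<lambda>M. M *\<^sub>v v"] carriers that by simp
  have u: "Du *\<^sub>v (Au *\<^sub>v xu) = Dt *\<^sub>v (At *\<^sub>v (S *\<^sub>v xu))"
    using arg_cong[OF eqs(3), of "\<lambda>M. M *\<^sub>v xu"] carriers vecs mult_carrier_mat[OF carriers(6,8)]
    by simp
  have "hcat n Bs Bt *\<^sub>v (xs @\<^sub>v (xt + S *\<^sub>v xu)) = Bs *\<^sub>v xs + (Bt *\<^sub>v xt + Bt *\<^sub>v (S *\<^sub>v xu))"
    using carriers vecs Sxu
    by (simp add: hcat_mult_append_vec mult_add_distrib_mat_vec[OF carriers(10) vecs(2) Sxu])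
  then have "F *\<^sub>v (hcat n Bs Bt *\<^sub>v (xs @\<^sub>v (xt + S *\<^sub>v xu)))
      = F *\<^sub>v (Bs *\<^sub>v xs) + (F *\<^sub>v (Bt *\<^sub>v xt) + F *\<^sub>v (Bt *\<^sub>v (S *\<^sub>v xu)))"
    using carriers vecs Sxu by (simp add: mult_add_distrib_mat_vec[of F n n])
  also have "\<dots> = Ds *\<^sub>v (As *\<^sub>v xs) + (Dt *\<^sub>v (At *\<^sub>v xt) + Du *\<^sub>v (Au *\<^sub>v xu))"
    using vecs Sxu by (simp add: s t u)
  also have "\<dots> = Ds *\<^sub>v (As *\<^sub>v xs) + Dt *\<^sub>v (At *\<^sub>v xt) + Du *\<^sub>v (Au *\<^sub>v xu)"
    using carriers vecs by (intro assoc_add_vec[symmetric, of _ n]) auto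
  finally show ?thesis by (rule sym)
qed

section \<open>Specialization of rational functions\<close>

text \<open>Evaluating a rational function at e is only partially defined, hence a relation.\<close>

definition specializes :: "(lecvar \<Rightarrow> 'f::field alg_closure) \<Rightarrow> 'f ratfun \<Rightarrow> 'f alg_closure \<Rightarrow> bool" where
  "specializes e x y \<longleftrightarrow>
     (\<exists>p q. mpoly_eval e q \<noteq> 0 \<and> x = Fract p q \<and> y = mpoly_eval e p / mpoly_eval e q)"

lemma specializes_Fract:
  "mpoly_eval e q \<noteq> 0 \<Longrightarrow> specializes e (Fract p q) (mpoly_eval e p / mpoly_eval e q)"
  unfolding specializes_def by blast

lemma specializes_unique:
  assumes "specializes e x y" "specializes e x y'"
  shows "y = y'"
proof -
  obtain p q where pq: "mpoly_eval e q \<noteq> 0" "x = Fract p q" "y = mpoly_eval e p / mpoly_eval e q"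
    using assms(1) unfolding specializes_def by blast
  obtain p' q' where pq': "mpoly_eval e q' \<noteq> 0" "x = Fract p' q'" "y' = mpoly_eval e p' / mpoly_eval e q'"
    using assms(2) unfolding specializes_def by blast
  have "q \<noteq> 0" "q' \<noteq> 0" using pq(1) pq'(1) by auto
  then have "p * q' = p' * q" using pq(2) pq'(2) by (simp add: eq_fract)
  then have "mpoly_eval e p * mpoly_eval e q' = mpoly_eval e p' * mpoly_eval e q"
    by (metis mpoly_eval_mult)
  then show ?thesis using pq pq' by (simp add: frac_eq_eq)
qed

lemma specializes_to_fract: "specializes e (to_fract p) (mpoly_eval e p)"
  using specializes_Fract[of e 1 p] by (simp add: mpoly_eval_one to_fract_def)

lemma specializes_add:
  assumes "specializes e x y" "specializes e x' y'"
  shows "specializes e (x + x') (y + y')"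
proof -
  obtain p q where pq: "mpoly_eval e q \<noteq> 0" "x = Fract p q" "y = mpoly_eval e p / mpoly_eval e q"
    using assms(1) unfolding specializes_def by blast
  obtain p' q' where pq': "mpoly_eval e q' \<noteq> 0" "x' = Fract p' q'" "y' = mpoly_eval e p' / mpoly_eval e q'"
    using assms(2) unfolding specializes_def by blast
  have "q \<noteq> 0" "q' \<noteq> 0" using pq(1) pq'(1) by auto
  then have "x + x' = Fract (p * q' + p' * q) (q * q')" using pq(2) pq'(2) by simp
  moreover have "y + y' = mpoly_eval e (p * q' + p' * q) / mpoly_eval e (q * q')"
    using pq pq' by (simp add: mpoly_eval_add mpoly_eval_mult add_frac_eq)
  ultimately show ?thesis
    using specializes_Fract[of e "q * q'"] pq(1) pq'(1) by (simp add: mpoly_eval_mult)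
qed

lemma specializes_mult:
  assumes "specializes e x y" "specializes e x' y'"
  shows "specializes e (x * x') (y * y')"
proof -
  obtain p q where pq: "mpoly_eval e q \<noteq> 0" "x = Fract p q" "y = mpoly_eval e p / mpoly_eval e q"
    using assms(1) unfolding specializes_def by blast
  obtain p' q' where pq': "mpoly_eval e q' \<noteq> 0" "x' = Fract p' q'" "y' = mpoly_eval e p' / mpoly_eval e q'"
    using assms(2) unfolding specializes_def by blast
  have "x * x' = Fract (p * p') (q * q')" using pq(2) pq'(2) by simp
  moreover have "y * y' = mpoly_eval e (p * p') / mpoly_eval e (q * q')"
    using pq pq' by (simp add: mpoly_eval_mult)
  ultimately show ?thesis
    using specializes_Fract[of e "q * q'" "p * p'"] pq(1) pq'(1) by (simp add: mpoly_eval_mult)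
qed

lemma specializes_inverse:
  assumes "specializes e x y" "y \<noteq> 0"
  shows "specializes e (inverse x) (inverse y)"
proof -
  obtain p q where pq: "mpoly_eval e q \<noteq> 0" "x = Fract p q" "y = mpoly_eval e p / mpoly_eval e q"
    using assms(1) unfolding specializes_def by blast
  then have "mpoly_eval e p \<noteq> 0" using assms(2) by simp
  then show ?thesis using pq specializes_Fract[of e p q] by simp
qed

lemma specializes_of_int:
  fixes e :: "lecvar \<Rightarrow> 'f::field alg_closure"
  shows "specializes e (of_int k) (of_int k)"
proof -
  have "(of_int k :: 'f ratfun) = Fract (of_int k) 1"
  proof (cases k rule: int_cases)
    case (nonneg n)
    then show ?thesis by (simp add: of_nat_fract)
  next
    case (neg n)
    then show ?thesis by (simp only: of_int_minus of_int_of_nat_eq of_nat_fract minus_fract)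
  qed
  then show ?thesis
    using specializes_to_fract[of e "of_int k"] by (simp add: mpoly_eval_hom.hom_of_int to_fract_def)
qed

lemma specializes_0_1:
  fixes e :: "lecvar \<Rightarrow> 'f::field alg_closure"
  shows "specializes e 0 0" "specializes e 1 1"
  using specializes_of_int[of e 0] specializes_of_int[of e 1] by simp_all

lemma specializes_sum:
  fixes e :: "lecvar \<Rightarrow> 'f::field alg_closure"
  shows "(\<And>i. i \<in> A \<Longrightarrow> specializes e (f i) (g i)) \<Longrightarrow> specializes e (sum f A) (sum g A)"
  by (induction A rule: infinite_finite_induct)
    (auto intro: specializes_add specializes_0_1)

lemma specializes_prod:
  fixes e :: "lecvar \<Rightarrow> 'f::field alg_closure"
  shows "(\<And>i. i \<in> A \<Longrightarrow> specializes e (f i) (g i)) \<Longrightarrow> specializes e (prod f A) (prod g A)"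
  by (induction A rule: infinite_finite_induct)
    (auto intro: specializes_mult specializes_0_1)

lemma specializes_power: "specializes e x y \<Longrightarrow> specializes e (x ^ k) (y ^ k)"
  using specializes_prod[of "{..<k}" e "\<lambda>_. x" "\<lambda>_. y"] by simp

definition mat_specializes ::
  "(lecvar \<Rightarrow> 'f::field alg_closure) \<Rightarrow> 'f ratfun mat \<Rightarrow> 'f alg_closure mat \<Rightarrow> bool" where
  "mat_specializes e A B \<longleftrightarrow> dim_row A = dim_row B \<and> dim_col A = dim_col B \<and>
     (\<forall>r < dim_row B. \<forall>c < dim_col B. specializes e (A $$ (r, c)) (B $$ (r, c)))"

lemma mat_specializesI:
  assumes "A \<in> carrier_mat n m" "B \<in> carrier_mat n m"
    and "\<And>r c. r < n \<Longrightarrow> c < m \<Longrightarrow> specializes e (A $$ (r, c)) (B $$ (r, c))"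
  shows "mat_specializes e A B"
  using assms unfolding mat_specializes_def by auto

lemma mat_specializes_mult:
  assumes "mat_specializes e A B" "mat_specializes e A' B'" "dim_col B = dim_row B'"
  shows "mat_specializes e (A * A') (B * B')"
  using assms unfolding mat_specializes_def
  by (auto simp: scalar_prod_def intro!: specializes_sum specializes_mult)

lemma mat_specializes_hcat:
  assumes "mat_specializes e A B" "mat_specializes e A' B'"
    and "B \<in> carrier_mat n p" "B' \<in> carrier_mat n q"
  shows "mat_specializes e (hcat n A A') (hcat n B B')"
proof -
  have "A \<in> carrier_mat n p" "A' \<in> carrier_mat n q"
    using assms unfolding mat_specializes_def by auto
  then show ?thesis
    using assms by (intro mat_specializesI[OF hcat_carrier hcat_carrier])
      (auto simp: hcat_index mat_specializes_def)
qed

lemma mat_specializes_mat_diag: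
  "(\<And>r. r < n \<Longrightarrow> specializes e (f r) (g r)) \<Longrightarrow> mat_specializes e (mat_diag n f) (mat_diag n g)"
  by (auto simp: mat_specializes_def mat_diag_def intro: specializes_0_1)

lemma specializes_det:
  assumes "mat_specializes e A B"
  shows "specializes e (det A) (det B)"
proof (cases "dim_row B = dim_col B")
  case True
  let ?n = "dim_row B"
  have carriers: "A \<in> carrier_mat ?n ?n" "B \<in> carrier_mat ?n ?n"
    using assms True by (auto simp: mat_specializes_def)
  have "specializes e (A $$ (i, p i)) (B $$ (i, p i))" if "p permutes {0..<?n}" "i < ?n" for p i
    using assms that True permutes_in_image[OF that(1), of i] by (auto simp: mat_specializes_def)
  then show ?thesis
    unfolding det_def'[OF carriers(1)] det_def'[OF carriers(2)]
    by (intro specializes_sum specializes_mult specializes_of_int specializes_prod) auto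
next
  case False
  then show ?thesis using assms by (simp add: mat_specializes_def det_def specializes_0_1)
qed

section \<open>Paths and transfer coefficients\<close>

lemma is_path_distinct:
  assumes dag: "finite_dag N" and p: "is_path N es s t"
  shows "distinct es"
proof (rule ccontr)
  assume "\<not> distinct es"
  then obtain a b where ab: "a < b" "b < length es" "es ! a = es ! b"
    by (metis distinct_conv_nth linorder_neqE_nat)
  define cyc where "cyc = take (b - a) (drop a es)"
  have len: "length cyc = b - a" using ab by (simp add: cyc_def)
  have nth: "l < b - a \<Longrightarrow> cyc ! l = es ! (a + l)" for l using ab by (simp add: cyc_def)
  have "is_path N cyc (etail N (es ! a)) (etail N (es ! a))"
    unfolding is_path_def
  proof (intro conjI allI impI)
    show "cyc \<noteq> []" using len ab by auto
    have "set cyc \<subseteq> set es" unfolding cyc_def by (meson set_drop_subset set_take_subset subset_trans)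
    then show "set cyc \<subseteq> edges N" using p unfolding is_path_def by blast
    show "etail N (hd cyc) = etail N (es ! a)"
      using nth[of 0] len ab \<open>cyc \<noteq> []\<close> by (simp add: hd_conv_nth)
    have "last cyc = es ! (b - 1)"
      using nth[of "b - a - 1"] len ab \<open>cyc \<noteq> []\<close> by (simp add: last_conv_nth)
    moreover have "ehead N (es ! (b - 1)) = etail N (es ! b)"
      using p ab unfolding is_path_def by (metis Suc_diff_1 gr_implies_not0 neq0_conv)
    ultimately show "ehead N (last cyc) = etail N (es ! a)" using ab by simp
  next
    fix l assume "Suc l < length cyc"
    then show "ehead N (cyc ! l) = etail N (cyc ! Suc l)"
      using nth[of l] nth[of "Suc l"] len p ab unfolding is_path_def by auto
  qed
  then show False using dag unfolding finite_dag_def by blast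
qed

lemma finite_paths:
  assumes "finite_dag N"
  shows "finite (paths N s t)"
proof -
  have fin: "finite (edges N)" using assms by (simp add: finite_dag_def)
  have "paths N s t \<subseteq> {es. set es \<subseteq> edges N \<and> length es \<le> card (edges N)}"
  proof
    fix es assume "es \<in> paths N s t"
    then have p: "is_path N es s t" by (simp add: paths_def)
    then have "set es \<subseteq> edges N" by (simp add: is_path_def)
    moreover have "length es = card (set es)"
      using is_path_distinct[OF assms p] by (simp add: distinct_card)
    ultimately show "es \<in> {es. set es \<subseteq> edges N \<and> length es \<le> card (edges N)}"
      using card_mono[OF fin] by auto
  qed
  then show ?thesis using finite_lists_length_le[OF fin] by (rule finite_subset)
qed

lemma paths_nonempty_if_min_cut_pos:
  assumes "min_cut N s t \<ge> 1"
  shows "paths N s t \<noteq> {}"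
proof
  assume "paths N s t = {}"
  then have "\<exists>C \<subseteq> edges N. card C = 0 \<and> (\<forall>es. is_path N es s t \<longrightarrow> set es \<inter> C \<noteq> {})"
    by (intro exI[of _ "{}"]) (auto simp: paths_def)
  then have "min_cut N s t \<le> 0" unfolding min_cut_def by (rule Least_le)
  then show False using assms by simp
qed

lemma paths_nonempty_if_min_cuts:
  assumes "\<forall>i\<in>{1,2,3}. min_cut N (src N i) (dst N i) = 1"
    and "\<forall>i\<in>{1,2,3}. \<forall>j\<in>{1,2,3}. i \<noteq> j \<longrightarrow> min_cut N (src N i) (dst N j) \<ge> 1"
    and "i \<in> {1,2,3}" "j \<in> {1,2,3}"
  shows "paths N (src N i) (dst N j) \<noteq> {}"
proof (cases "i = j")
  case True
  then have "min_cut N (src N i) (dst N j) = 1" using assms(1,3) by blast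
  then show ?thesis by (intro paths_nonempty_if_min_cut_pos) simp
next
  case False
  then show ?thesis using assms(2-4) by (intro paths_nonempty_if_min_cut_pos) blast
qed

definition gain_monomial :: "nat \<Rightarrow> nat \<Rightarrow> nat list \<Rightarrow> lecvar \<Rightarrow>\<^sub>0 nat" where
  "gain_monomial i j es = Poly_Mapping.single (src_var i (hd es)) 1
     + (\<Sum>l<length es - 1. Poly_Mapping.single (lnk_var (es ! l) (es ! Suc l)) 1)
     + Poly_Mapping.single (dst_var (last es) j) 1"

lemma path_gain_eq_monom_eval: "path_gain e i j es = monom_eval e (gain_monomial i j es)"
  by (simp add: path_gain_def gain_monomial_def monom_eval_add monom_eval_sum)

definition adjacent_pairs :: "'a list \<Rightarrow> ('a \<times> 'a) set" where
  "adjacent_pairs xs = (\<lambda>l. (xs ! l, xs ! Suc l)) ` {..<length xs - 1}"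

lemma adjacent_pairs_Cons:
  "adjacent_pairs (a # xs) = (if xs = [] then {} else insert (a, hd xs) (adjacent_pairs xs))"
proof (cases xs)
  case (Cons b ys)
  have "adjacent_pairs (a # xs) = (\<lambda>l. ((a # xs) ! l, (a # xs) ! Suc l)) ` {..<Suc (length xs - 1)}"
    unfolding adjacent_pairs_def using Cons by simp
  also have "\<dots> = insert (a, hd xs) (adjacent_pairs xs)"
    unfolding lessThan_Suc_eq_insert_0 image_insert image_image adjacent_pairs_def using Cons by simp
  finally show ?thesis using Cons by simp
qed (simp add: adjacent_pairs_def)

lemma adjacent_pairs_subset: "adjacent_pairs xs \<subseteq> set xs \<times> set xs"
  unfolding adjacent_pairs_def by auto

lemma distinct_list_eq_if_adjacent_pairs_eq:
  "distinct xs \<Longrightarrow> distinct ys \<Longrightarrow> xs \<noteq> [] \<Longrightarrow> ys \<noteq> [] \<Longrightarrow> hd xs = hd ys \<Longrightarrow>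
    adjacent_pairs xs = adjacent_pairs ys \<Longrightarrow> xs = ys"
proof (induction xs arbitrary: ys)
  case (Cons a xs)
  obtain ys' where ys: "ys = a # ys'" using Cons.prems by (cases ys) auto
  have out_a: "(a, z) \<notin> adjacent_pairs xs" "(a, z) \<notin> adjacent_pairs ys'" for z
    using adjacent_pairs_subset[of xs] adjacent_pairs_subset[of ys'] Cons.prems(1,2) ys by auto
  show ?case
  proof (cases "xs = []")
    case True
    then show ?thesis
      using Cons.prems(6) ys out_a(2) by (auto simp: adjacent_pairs_Cons split: if_splits)
  next
    case False
    then have "ys' \<noteq> []" using Cons.prems(6) ys by (auto simp: adjacent_pairs_Cons split: if_splits)
    then have P: "insert (a, hd xs) (adjacent_pairs xs) = insert (a, hd ys') (adjacent_pairs ys')"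
      using Cons.prems(6) ys False by (simp add: adjacent_pairs_Cons)
    then have "hd xs = hd ys'" using out_a by blast
    moreover have "adjacent_pairs xs = adjacent_pairs ys'"
    proof -
      have "adjacent_pairs xs = insert (a, hd xs) (adjacent_pairs xs) - {(a, hd xs)}"
        using out_a by auto
      also have "\<dots> = insert (a, hd ys') (adjacent_pairs ys') - {(a, hd ys')}"
        using P \<open>hd xs = hd ys'\<close> by simp
      also have "\<dots> = adjacent_pairs ys'" using out_a by auto
      finally show ?thesis .
    qed
    ultimately have "xs = ys'"
      using Cons.IH[of ys'] Cons.prems(1,2) ys False \<open>ys' \<noteq> []\<close> by simp
    then show ?thesis using ys by simp
  qed
qed simp

lemma keys_gain_monomial:
  "Poly_Mapping.keys (gain_monomial i j es) =
     {src_var i (hd es)} \<union> (\<lambda>(a, b). lnk_var a b) ` adjacent_pairs es \<union> {dst_var (last es) j}"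
proof -
  have keys_plus: "Poly_Mapping.keys (a + b :: 'v \<Rightarrow>\<^sub>0 nat) = Poly_Mapping.keys a \<union> Poly_Mapping.keys b"
    for a b by (auto simp: in_keys_iff lookup_add)
  have keys_sum_upto: "Poly_Mapping.keys (\<Sum>l<k. f l :: 'v \<Rightarrow>\<^sub>0 nat) = (\<Union>l<k. Poly_Mapping.keys (f l))"
    for k :: nat and f by (induction k) (auto simp: keys_plus lessThan_Suc)
  show ?thesis
    unfolding gain_monomial_def keys_plus keys_sum_upto adjacent_pairs_def image_image by auto
qed

lemma inj_on_gain_monomial:
  assumes "finite_dag N"
  shows "inj_on (gain_monomial i j) (paths N s t)"
proof (rule inj_onI)
  fix es1 es2
  assume "es1 \<in> paths N s t" "es2 \<in> paths N s t" and eq: "gain_monomial i j es1 = gain_monomial i j es2"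
  then have p: "is_path N es1 s t" "is_path N es2 s t" by (auto simp: paths_def)
  have "src_var i (hd es1) \<in> Poly_Mapping.keys (gain_monomial i j es2)"
    unfolding eq[symmetric] keys_gain_monomial by simp
  then have "hd es1 = hd es2"
    unfolding keys_gain_monomial by (auto simp: src_var_def lnk_var_def dst_var_def)
  moreover have "adjacent_pairs es1 = adjacent_pairs es2"
  proof -
    have "(a, b) \<in> adjacent_pairs es \<longleftrightarrow> lnk_var a b \<in> Poly_Mapping.keys (gain_monomial i j es)"
      for a b es
      unfolding keys_gain_monomial by (force simp: src_var_def lnk_var_def dst_var_def)
    then show ?thesis using eq by auto
  qed
  ultimately show "es1 = es2"
    using distinct_list_eq_if_adjacent_pairs_eq[of es1 es2] is_path_distinct[OF assms p(1)]
      is_path_distinct[OF assms p(2)] p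
    by (simp add: is_path_def)
qed

lemma Mval_nonzero_somewhere:
  fixes x :: "'a::field"
  assumes dag: "finite_dag N" and ne: "paths N (src N i) (dst N j) \<noteq> {}" and x: "x \<noteq> 0"
    and inf: "infinite (UNIV :: 'a set)"
  shows "\<exists>e. Mval N e i j x \<noteq> 0"
proof -
  let ?P = "paths N (src N i) (dst N j)"
  obtain es0 where es0: "es0 \<in> ?P" using ne by blast
  define c where "c es = x ^ (length es + 1 - dmin N)" for es :: "nat list"
  have "{es\<in>?P. gain_monomial i j es = gain_monomial i j es0} = {es0}"
    using inj_on_gain_monomial[OF dag, of i j] es0 by (auto dest: inj_onD)
  then have "\<exists>e. (\<Sum>es\<in>?P. c es * monom_eval e (gain_monomial i j es)) \<noteq> 0"
    using finite_paths[OF dag] x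
    by (intro monom_sum_nonvanishing[OF inf, where m = "gain_monomial i j es0"
          and VS = "\<Union>es\<in>?P. Poly_Mapping.keys (gain_monomial i j es)"])
      (auto simp: c_def)
  then show ?thesis
    unfolding Mval_def c_def path_gain_eq_monom_eval by (simp add: mult.commute)
qed

lemma comm_ring_hom_Mval:
  assumes "comm_ring_hom h"
  shows "h (Mval N eps i j x) = Mval N (h \<circ> eps) i j (h x)"
proof -
  interpret comm_ring_hom h by fact
  show ?thesis
    unfolding Mval_def path_gain_def by (simp add: hom_sum hom_mult hom_prod hom_power)
qed

definition lec_monomial :: "lecvar \<Rightarrow> (lecvar, 'f::field) mpoly" where
  "lec_monomial v = Poly_Mapping.single (Poly_Mapping.single v 1) 1"

definition gain_poly :: "'v mun \<Rightarrow> 'f::field \<Rightarrow> nat \<Rightarrow> nat \<Rightarrow> nat \<Rightarrow> (lecvar, 'f) mpoly" where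
  "gain_poly N a i j r = Mval N lec_monomial i j (Poly_Mapping.single 0 a ^ r)"

lemma comm_ring_hom_to_fract: "comm_ring_hom to_fract"
  by unfold_locales simp_all

lemma Mval_lec_indet:
  "Mval N lec_indet i j (rconst a ^ r) = to_fract (gain_poly N a i j r)"
proof -
  interpret comm_ring_hom to_fract by (rule comm_ring_hom_to_fract)
  have indets: "lec_indet = to_fract \<circ> lec_monomial"
    and const: "rconst a = to_fract (Poly_Mapping.single 0 a)"
    by (simp_all add: fun_eq_iff lec_indet_def lec_monomial_def rconst_def to_fract_def)
  show ?thesis
    unfolding gain_poly_def comm_ring_hom_Mval[OF comm_ring_hom_to_fract] hom_power indets const ..
qed

lemma mpoly_eval_gain_poly: "mpoly_eval e (gain_poly N a i j r) = Mval N e i j (to_ac a ^ r)"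
proof -
  have "mpoly_eval e \<circ> lec_monomial = e" by (simp add: fun_eq_iff lec_monomial_def)
  then show ?thesis
    unfolding gain_poly_def comm_ring_hom_Mval[OF mpoly_eval_hom.comm_ring_hom_axioms]
    by (simp add: mpoly_eval_hom.hom_power)
qed

lemma gain_poly_nonzero:
  fixes a :: "'f::field"
  assumes "finite_dag N" "paths N (src N i) (dst N j) \<noteq> {}" "a \<noteq> 0"
  shows "gain_poly N a i j r \<noteq> 0"
proof -
  have "to_ac a ^ r \<noteq> 0" using assms(3) by simp
  then obtain e :: "lecvar \<Rightarrow> 'f alg_closure" where "Mval N e i j (to_ac a ^ r) \<noteq> 0"
    using Mval_nonzero_somewhere[OF assms(1,2) \<open>to_ac a ^ r \<noteq> 0\<close> infinite_UNIV_alg_closed] by blast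
  then have "mpoly_eval e (gain_poly N a i j r) \<noteq> 0" unfolding mpoly_eval_gain_poly .
  then show ?thesis by (rule contrapos_nn) (simp only: mpoly_eval_zero)
qed

section \<open>The precoding scheme\<close>

definition Mdiag :: "'v mun \<Rightarrow> (lecvar \<Rightarrow> 'k::comm_ring_1) \<Rightarrow> 'k \<Rightarrow> nat \<Rightarrow> nat \<Rightarrow> nat \<Rightarrow> 'k" where
  "Mdiag N eps a i j r = Mval N eps i j (a ^ r)"

lemma Mhat_eq_mat_diag: "Mhat N eps a n i j = mat_diag n (Mdiag N eps a i j)"
  by (auto simp: Mhat_def mat_diag_def Mdiag_def intro!: eq_matI)

lemma Mhat_carrier: "Mhat N eps a n i j \<in> carrier_mat n n"
  by (simp add: Mhat_eq_mat_diag)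

lemma Mdiag_lec_indet: "Mdiag N lec_indet (rconst a) i j r = to_fract (gain_poly N a i j r)"
  by (simp add: Mdiag_def Mval_lec_indet)

lemma Mdiag_eq_mpoly_eval: "Mdiag N e (to_ac a) i j r = mpoly_eval e (gain_poly N a i j r)"
  by (simp add: Mdiag_def mpoly_eval_gain_poly)

definition gains_nonzero :: "(nat \<Rightarrow> nat \<Rightarrow> nat \<Rightarrow> 'k::zero) \<Rightarrow> nat \<Rightarrow> bool" where
  "gains_nonzero d n \<longleftrightarrow> (\<forall>i\<in>{1,2,3}. \<forall>j\<in>{1,2,3}. \<forall>r<n. d i j r \<noteq> 0)"

definition Udiag :: "(nat \<Rightarrow> nat \<Rightarrow> nat \<Rightarrow> 'k::field) \<Rightarrow> nat \<Rightarrow> 'k" where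
  "Udiag d r = inverse (d 1 2 r) * d 3 2 r * inverse (d 3 1 r) * d 2 1 r * inverse (d 2 3 r) * d 1 3 r"

definition Rdiag :: "(nat \<Rightarrow> nat \<Rightarrow> nat \<Rightarrow> 'k::field) \<Rightarrow> nat \<Rightarrow> 'k" where
  "Rdiag d r = d 1 3 r * inverse (d 2 3 r)"

definition Sdiag :: "(nat \<Rightarrow> nat \<Rightarrow> nat \<Rightarrow> 'k::field) \<Rightarrow> nat \<Rightarrow> 'k" where
  "Sdiag d r = d 1 2 r * inverse (d 3 2 r)"

lemma mat_of_cols_upt_index:
  "r < n \<Longrightarrow> k < m \<Longrightarrow> mat_of_cols n (map f [0..<m]) $$ (r, k) = f k $ r"
  by (simp add: mat_of_cols_index)

context
  fixes N :: "'v mun" and eps :: "lecvar \<Rightarrow> 'k::field" and a :: 'k and n :: nat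
  assumes nonzero: "gains_nonzero (Mdiag N eps a) n"
begin

lemma Mdiag_nonzero: "i \<in> {1,2,3} \<Longrightarrow> j \<in> {1,2,3} \<Longrightarrow> r < n \<Longrightarrow> Mdiag N eps a i j r \<noteq> 0"
  using nonzero unfolding gains_nonzero_def by blast

lemma minv_mat_diag_Mdiag:
  "i \<in> {1,2,3} \<Longrightarrow> j \<in> {1,2,3} \<Longrightarrow>
    minv (mat_diag n (Mdiag N eps a i j)) = mat_diag n (\<lambda>r. inverse (Mdiag N eps a i j r))"
  using Mdiag_nonzero by (intro minv_mat_diag) blast

lemma minv_Mhat_mult_Mhat:
  "i \<in> {1,2,3} \<Longrightarrow> j \<in> {1,2,3} \<Longrightarrow>
    minv (Mhat N eps a n i j) * Mhat N eps a n k l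
      = mat_diag n (\<lambda>r. inverse (Mdiag N eps a i j r) * Mdiag N eps a k l r)"
  by (simp add: minv_mat_diag_Mdiag Mhat_eq_mat_diag)

lemma minv_Mhat_mult_carrier:
  "i \<in> {1,2,3} \<Longrightarrow> j \<in> {1,2,3} \<Longrightarrow> B \<in> carrier_mat n m \<Longrightarrow>
    minv (Mhat N eps a n i j) * Mhat N eps a n k l * B \<in> carrier_mat n m"
  by (auto simp: minv_Mhat_mult_Mhat intro!: mult_carrier_mat[OF mat_diag_dim])

lemma Mhat_mult_cancel:
  assumes "i \<in> {1,2,3}" "j \<in> {1,2,3}" "B \<in> carrier_mat n m"
  shows "Mhat N eps a n i j * (minv (Mhat N eps a n i j) * Mhat N eps a n k l * B)
       = Mhat N eps a n k l * B"
proof -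
  have "mat_diag n (\<lambda>r. Mdiag N eps a i j r * (inverse (Mdiag N eps a i j r) * Mdiag N eps a k l r))
      = mat_diag n (Mdiag N eps a k l)"
    using Mdiag_nonzero[OF assms(1,2)] by (intro mat_diag_cong) simp
  then show ?thesis
    using assms(3)
    by (simp add: minv_mat_diag_Mdiag[OF assms(1,2)] Mhat_eq_mat_diag
        assoc_mult_mat[symmetric, of _ n n _ n B m])
qed

lemma Mhat_mult_index:
  assumes "dim_row A = n" "r < n" "c < dim_col A"
  shows "(Mhat N eps a n i j * A) $$ (r, c) = Mdiag N eps a i j r * A $$ (r, c)"
proof -
  have "A \<in> carrier_mat n (dim_col A)" using assms(1) by (intro carrier_matI) simp_all
  then have "Mhat N eps a n i j * A = mat n (dim_col A) (\<lambda>(r, c). Mdiag N eps a i j r * A $$ (r, c))"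
    unfolding Mhat_eq_mat_diag by (rule mat_diag_mult_left)
  then show ?thesis using assms(2,3) by simp
qed

lemma Uhat_eq: "Uhat N eps a n = mat_diag n (Udiag (Mdiag N eps a))"
  by (simp add: Uhat_def minv_mat_diag_Mdiag Mhat_eq_mat_diag Udiag_def[abs_def])

lemma Rhat_eq: "Rhat N eps a n = mat_diag n (Rdiag (Mdiag N eps a))"
  by (simp add: Rhat_def minv_mat_diag_Mdiag Mhat_eq_mat_diag Rdiag_def[abs_def])

lemma Shat_eq: "Shat N eps a n = mat_diag n (Sdiag (Mdiag N eps a))"
  by (simp add: Shat_def minv_mat_diag_Mdiag Mhat_eq_mat_diag Sdiag_def[abs_def])

lemma Uhat_power_W: "(Uhat N eps a n ^\<^sub>m k) *\<^sub>v Wvec n = vec n (\<lambda>r. Udiag (Mdiag N eps a) r ^ k)"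
  by (rule eq_vecI) (simp_all add: Uhat_eq mat_diag_pow mat_diag_mult_vec Wvec_def)

end

text \<open>The matrix whose rank is assumed to be full at destination T_j: the signal space of S_j next
  to the space into which the signals of the other two sources are aligned.\<close>

definition recv_mat :: "'v mun \<Rightarrow> (lecvar \<Rightarrow> 'k::field) \<Rightarrow> 'k \<Rightarrow> nat \<Rightarrow> nat \<Rightarrow> 'k mat" where
  "recv_mat N eps a n' j =
     (if j = 1 then hcat (2 * n' + 1) (V1 N eps a n')
        (minv (Mhat N eps a (2 * n' + 1) 1 1) * Mhat N eps a (2 * n' + 1) 2 1 * V2 N eps a n')
      else if j = 2 then hcat (2 * n' + 1)
        (minv (Mhat N eps a (2 * n' + 1) 1 2) * Mhat N eps a (2 * n' + 1) 2 2 * V2 N eps a n')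
        (V1 N eps a n')
      else hcat (2 * n' + 1)
        (minv (Mhat N eps a (2 * n' + 1) 1 3) * Mhat N eps a (2 * n' + 1) 3 3 * V3 N eps a n')
        (V1 N eps a n'))"

lemma recv_mat_simps:
  "recv_mat N eps a n' 1 = hcat (2 * n' + 1) (V1 N eps a n')
     (minv (Mhat N eps a (2 * n' + 1) 1 1) * Mhat N eps a (2 * n' + 1) 2 1 * V2 N eps a n')"
  "recv_mat N eps a n' 2 = hcat (2 * n' + 1)
     (minv (Mhat N eps a (2 * n' + 1) 1 2) * Mhat N eps a (2 * n' + 1) 2 2 * V2 N eps a n')
     (V1 N eps a n')"
  "recv_mat N eps a n' 3 = hcat (2 * n' + 1)
     (minv (Mhat N eps a (2 * n' + 1) 1 3) * Mhat N eps a (2 * n' + 1) 3 3 * V3 N eps a n')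
     (V1 N eps a n')"
  by (simp_all add: recv_mat_def)

lemma Yout_eq:
  "Yout N eps a n' j xs = Mhat N eps a (2 * n' + 1) 1 j *\<^sub>v (V1 N eps a n' *\<^sub>v xs 1)
     + Mhat N eps a (2 * n' + 1) 2 j *\<^sub>v (V2 N eps a n' *\<^sub>v xs 2)
     + Mhat N eps a (2 * n' + 1) 3 j *\<^sub>v (V3 N eps a n' *\<^sub>v xs 3)"
  unfolding Yout_def Let_def ..

context
  fixes N :: "'v mun" and eps :: "lecvar \<Rightarrow> 'k::field" and a :: 'k and n' n :: nat
  assumes nonzero: "gains_nonzero (Mdiag N eps a) n" and n: "n = 2 * n' + 1"
begin

lemma V1_eq: "V1 N eps a n' = mat n (n' + 1) (\<lambda>(r, k). Udiag (Mdiag N eps a) r ^ k)"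
  unfolding V1_def Let_def n[symmetric]
  by (rule eq_matI) (simp_all add: mat_of_cols_upt_index Uhat_power_W[OF nonzero] del: upt_Suc)

lemma V2_eq:
  "V2 N eps a n' = mat n n' (\<lambda>(r, k). Rdiag (Mdiag N eps a) r * Udiag (Mdiag N eps a) r ^ k)"
  unfolding V2_def Let_def n[symmetric]
  by (rule eq_matI) (simp_all add: mat_of_cols_upt_index Uhat_power_W[OF nonzero]
      Rhat_eq[OF nonzero] mat_diag_mult_vec del: upt_Suc)

lemma V3_eq:
  "V3 N eps a n' = mat n n' (\<lambda>(r, k). Sdiag (Mdiag N eps a) r * Udiag (Mdiag N eps a) r ^ (k + 1))"
  unfolding V3_def Let_def n[symmetric]
  by (rule eq_matI) (simp_all add: mat_of_cols_upt_index Uhat_power_W[OF nonzero]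
      Shat_eq[OF nonzero] mat_diag_mult_vec del: power_Suc upt_Suc pow_mat.simps)

lemma V_carriers:
  "V1 N eps a n' \<in> carrier_mat n (n' + 1)" "V2 N eps a n' \<in> carrier_mat n n'"
  "V3 N eps a n' \<in> carrier_mat n n'"
  by (simp_all add: V1_eq V2_eq V3_eq)

lemma V1_mult_window_mat:
  "s \<le> 1 \<Longrightarrow>
    V1 N eps a n' * window_mat (n' + 1) n' s = mat n n' (\<lambda>(r, c). Udiag (Mdiag N eps a) r ^ (c + s))"
  by (auto simp: mult_window_mat V1_eq intro!: eq_matI)

lemma align_V3_V2: "Mhat N eps a n 3 1 * V3 N eps a n' = Mhat N eps a n 2 1 * V2 N eps a n'"
proof (rule eq_matI)
  let ?d = "Mdiag N eps a"
  fix r c assume "r < dim_row (Mhat N eps a n 2 1 * V2 N eps a n')"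
    "c < dim_col (Mhat N eps a n 2 1 * V2 N eps a n')"
  then have rc: "r < n" "c < n'" by (simp_all add: Mhat_eq_mat_diag V2_eq)
  have L: "(Mhat N eps a n 3 1 * V3 N eps a n') $$ (r, c) = ?d 3 1 r * (Sdiag ?d r * Udiag ?d r ^ (c + 1))"
    using rc by (simp add: Mhat_mult_index[OF nonzero] V3_eq)
  have R: "(Mhat N eps a n 2 1 * V2 N eps a n') $$ (r, c) = ?d 2 1 r * (Rdiag ?d r * Udiag ?d r ^ c)"
    using rc by (simp add: Mhat_mult_index[OF nonzero] V2_eq)
  have "?d 3 1 r * Sdiag ?d r * Udiag ?d r = ?d 2 1 r * Rdiag ?d r"
    using Mdiag_nonzero[OF nonzero, of 1 2 r] Mdiag_nonzero[OF nonzero, of 3 2 r] Mdiag_nonzero[OF nonzero, of 3 1 r] rc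
    unfolding Sdiag_def Rdiag_def Udiag_def by (simp add: field_simps)
  note core = this
  have "?d 3 1 r * (Sdiag ?d r * Udiag ?d r ^ (c + 1)) = (?d 3 1 r * Sdiag ?d r * Udiag ?d r) * Udiag ?d r ^ c"
    by (simp add: mult_ac)
  also have "\<dots> = ?d 2 1 r * (Rdiag ?d r * Udiag ?d r ^ c)"
    unfolding core by (simp add: mult.assoc)
  finally show "(Mhat N eps a n 3 1 * V3 N eps a n') $$ (r, c) = (Mhat N eps a n 2 1 * V2 N eps a n') $$ (r, c)"
    unfolding L R .
qed (simp_all add: Mhat_eq_mat_diag V2_eq V3_eq)

lemma align_V3_V1:
  "Mhat N eps a n 3 2 * V3 N eps a n' = Mhat N eps a n 1 2 * (V1 N eps a n' * window_mat (n' + 1) n' 1)"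
proof (rule eq_matI)
  let ?d = "Mdiag N eps a"
  note W = V1_mult_window_mat[of 1, OF order.refl]
  fix r c assume "r < dim_row (Mhat N eps a n 1 2 * (V1 N eps a n' * window_mat (n' + 1) n' 1))"
    "c < dim_col (Mhat N eps a n 1 2 * (V1 N eps a n' * window_mat (n' + 1) n' 1))"
  then have rc: "r < n" "c < n'" unfolding W by (simp_all add: Mhat_eq_mat_diag)
  have L: "(Mhat N eps a n 3 2 * V3 N eps a n') $$ (r, c) = ?d 3 2 r * (Sdiag ?d r * Udiag ?d r ^ (c + 1))"
    using rc by (simp add: Mhat_mult_index[OF nonzero] V3_eq)
  have R: "(Mhat N eps a n 1 2 * (V1 N eps a n' * window_mat (n' + 1) n' 1)) $$ (r, c)
      = ?d 1 2 r * Udiag ?d r ^ (c + 1)"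
    using rc unfolding W by (simp add: Mhat_mult_index[OF nonzero])
  have "?d 3 2 r * (Sdiag ?d r * Udiag ?d r ^ (c + 1)) = ?d 1 2 r * Udiag ?d r ^ (c + 1)"
    using Mdiag_nonzero[OF nonzero, of 3 2 r] rc unfolding Sdiag_def by (simp add: field_simps)
  then show "(Mhat N eps a n 3 2 * V3 N eps a n') $$ (r, c)
      = (Mhat N eps a n 1 2 * (V1 N eps a n' * window_mat (n' + 1) n' 1)) $$ (r, c)"
    unfolding L R .
qed (unfold V1_mult_window_mat[of 1, OF order.refl], simp_all add: Mhat_eq_mat_diag V3_eq)

lemma align_V2_V1:
  "Mhat N eps a n 2 3 * V2 N eps a n' = Mhat N eps a n 1 3 * (V1 N eps a n' * window_mat (n' + 1) n' 0)"
proof (rule eq_matI)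
  let ?d = "Mdiag N eps a"
  note W = V1_mult_window_mat[of 0, OF le0]
  fix r c assume "r < dim_row (Mhat N eps a n 1 3 * (V1 N eps a n' * window_mat (n' + 1) n' 0))"
    "c < dim_col (Mhat N eps a n 1 3 * (V1 N eps a n' * window_mat (n' + 1) n' 0))"
  then have rc: "r < n" "c < n'" unfolding W by (simp_all add: Mhat_eq_mat_diag)
  have L: "(Mhat N eps a n 2 3 * V2 N eps a n') $$ (r, c) = ?d 2 3 r * (Rdiag ?d r * Udiag ?d r ^ c)"
    using rc by (simp add: Mhat_mult_index[OF nonzero] V2_eq)
  have R: "(Mhat N eps a n 1 3 * (V1 N eps a n' * window_mat (n' + 1) n' 0)) $$ (r, c)
      = ?d 1 3 r * Udiag ?d r ^ c"
    using rc unfolding W by (simp add: Mhat_mult_index[OF nonzero])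
  have "?d 2 3 r * (Rdiag ?d r * Udiag ?d r ^ c) = ?d 1 3 r * Udiag ?d r ^ c"
    using Mdiag_nonzero[OF nonzero, of 2 3 r] rc unfolding Rdiag_def by (simp add: field_simps)
  then show "(Mhat N eps a n 2 3 * V2 N eps a n') $$ (r, c)
      = (Mhat N eps a n 1 3 * (V1 N eps a n' * window_mat (n' + 1) n' 0)) $$ (r, c)"
    unfolding L R .
qed (unfold V1_mult_window_mat[of 0, OF le0], simp_all add: Mhat_eq_mat_diag V2_eq)

lemma recv_mat_carrier:
  assumes "j \<in> {1,2,3}"
  shows "recv_mat N eps a n' j \<in> carrier_mat n n"
proof -
  note V = V_carriers
  have "1 \<in> {1,2,3::nat}" by simp
  note D = minv_Mhat_mult_carrier[OF nonzero this assms]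
  have "n' + 1 + n' = n" "n' + (n' + 1) = n" using n by simp_all
  then show ?thesis
    using assms hcat_carrier[OF V(1) D[OF V(2)]] hcat_carrier[OF D[OF V(2)] V(1)]
      hcat_carrier[OF D[OF V(3)] V(1)]
    unfolding recv_mat_def n[symmetric] by auto
qed

context
  fixes xs :: "nat \<Rightarrow> 'k vec"
  assumes xs: "xs 1 \<in> carrier_vec (n' + 1)" "xs 2 \<in> carrier_vec n'" "xs 3 \<in> carrier_vec n'"
begin

lemma received_carriers:
  "Mhat N eps a n i j *\<^sub>v (V1 N eps a n' *\<^sub>v xs 1) \<in> carrier_vec n"
  "Mhat N eps a n i j *\<^sub>v (V2 N eps a n' *\<^sub>v xs 2) \<in> carrier_vec n"
  "Mhat N eps a n i j *\<^sub>v (V3 N eps a n' *\<^sub>v xs 3) \<in> carrier_vec n"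
  using mult_mat_vec_carrier[OF Mhat_carrier mult_mat_vec_carrier[OF V_carriers(1) xs(1)]]
    mult_mat_vec_carrier[OF Mhat_carrier mult_mat_vec_carrier[OF V_carriers(2) xs(2)]]
    mult_mat_vec_carrier[OF Mhat_carrier mult_mat_vec_carrier[OF V_carriers(3) xs(3)]] by blast+

lemma Yout_1_eq:
  "Yout N eps a n' 1 xs = Mhat N eps a n 1 1 *\<^sub>v (recv_mat N eps a n' 1 *\<^sub>v (xs 1 @\<^sub>v (xs 2 + xs 3)))"
proof -
  have idx: "1 \<in> {1,2,3::nat}" by simp
  have "Yout N eps a n' 1 xs
      = Mhat N eps a n 1 1 *\<^sub>v (recv_mat N eps a n' 1 *\<^sub>v (xs 1 @\<^sub>v (xs 2 + 1\<^sub>m n' *\<^sub>v xs 3)))"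
    unfolding Yout_eq recv_mat_simps n[symmetric]
    using Mhat_carrier V_carriers xs align_V3_V2 minv_Mhat_mult_carrier[OF nonzero idx idx V_carriers(2)]
      Mhat_mult_cancel[OF nonzero idx idx V_carriers(2)]
    by (intro aligned_interference) (auto simp: n)
  then show ?thesis using xs(3) by simp
qed

lemma Yout_2_eq:
  "Yout N eps a n' 2 xs = Mhat N eps a n 1 2 *\<^sub>v
     (recv_mat N eps a n' 2 *\<^sub>v (xs 2 @\<^sub>v (xs 1 + window_mat (n' + 1) n' 1 *\<^sub>v xs 3)))"
proof -
  have idx: "1 \<in> {1,2,3::nat}" "2 \<in> {1,2,3::nat}" by simp_all
  have "Yout N eps a n' 2 xs = Mhat N eps a n 2 2 *\<^sub>v (V2 N eps a n' *\<^sub>v xs 2)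
      + Mhat N eps a n 1 2 *\<^sub>v (V1 N eps a n' *\<^sub>v xs 1) + Mhat N eps a n 3 2 *\<^sub>v (V3 N eps a n' *\<^sub>v xs 3)"
    unfolding Yout_eq n[symmetric] using received_carriers by (rule add_vec_permute)
  also have "\<dots> = Mhat N eps a n 1 2 *\<^sub>v
      (recv_mat N eps a n' 2 *\<^sub>v (xs 2 @\<^sub>v (xs 1 + window_mat (n' + 1) n' 1 *\<^sub>v xs 3)))"
    unfolding recv_mat_simps n[symmetric]
    using Mhat_carrier V_carriers xs align_V3_V1 window_mat_carrier
      minv_Mhat_mult_carrier[OF nonzero idx V_carriers(2)] Mhat_mult_cancel[OF nonzero idx V_carriers(2)]
    by (intro aligned_interference) auto
  finally show ?thesis .
qed

lemma Yout_3_eq: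
  "Yout N eps a n' 3 xs = Mhat N eps a n 1 3 *\<^sub>v
     (recv_mat N eps a n' 3 *\<^sub>v (xs 3 @\<^sub>v (xs 1 + window_mat (n' + 1) n' 0 *\<^sub>v xs 2)))"
proof -
  have idx: "1 \<in> {1,2,3::nat}" "3 \<in> {1,2,3::nat}" by simp_all
  have "Yout N eps a n' 3 xs = Mhat N eps a n 3 3 *\<^sub>v (V3 N eps a n' *\<^sub>v xs 3)
      + Mhat N eps a n 1 3 *\<^sub>v (V1 N eps a n' *\<^sub>v xs 1) + Mhat N eps a n 2 3 *\<^sub>v (V2 N eps a n' *\<^sub>v xs 2)"
    unfolding Yout_eq n[symmetric] using received_carriers by (rule add_vec_permute)
  also have "\<dots> = Mhat N eps a n 1 3 *\<^sub>v
      (recv_mat N eps a n' 3 *\<^sub>v (xs 3 @\<^sub>v (xs 1 + window_mat (n' + 1) n' 0 *\<^sub>v xs 2)))"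
    unfolding recv_mat_simps n[symmetric]
    using Mhat_carrier V_carriers xs align_V2_V1 window_mat_carrier
      minv_Mhat_mult_carrier[OF nonzero idx V_carriers(3)] Mhat_mult_cancel[OF nonzero idx V_carriers(3)]
    by (intro aligned_interference) auto
  finally show ?thesis .
qed

end

lemma Yout_factorization:
  assumes j: "j \<in> {1,2,3}" and xs: "\<forall>i\<in>{1,2,3}. xs i \<in> carrier_vec (xlen n' i)"
  shows "\<exists>z. z \<in> carrier_vec (n - xlen n' j) \<and>
    Yout N eps a n' j xs = Mhat N eps a n 1 j *\<^sub>v (recv_mat N eps a n' j *\<^sub>v (xs j @\<^sub>v z))"
proof -
  have x: "xs 1 \<in> carrier_vec (n' + 1)" "xs 2 \<in> carrier_vec n'" "xs 3 \<in> carrier_vec n'"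
    using xs by (auto simp: xlen_def)
  have w: "xs 1 + window_mat (n' + 1) n' s *\<^sub>v xs k \<in> carrier_vec (n' + 1)"
    if "xs k \<in> carrier_vec n'" for s k
    using add_carrier_vec[OF x(1) mult_mat_vec_carrier[OF window_mat_carrier that]] .
  consider "j = 1" | "j = 2" | "j = 3" using j by blast
  then show ?thesis
  proof cases
    case 1
    then show ?thesis using Yout_1_eq[OF x] x n by (intro exI[of _ "xs 2 + xs 3"]) (simp add: xlen_def)
  next
    case 2
    then show ?thesis using Yout_2_eq[OF x] w[OF x(3)] n
      by (intro exI[of _ "xs 1 + window_mat (n' + 1) n' 1 *\<^sub>v xs 3"]) (simp add: xlen_def)
  next
    case 3
    then show ?thesis using Yout_3_eq[OF x] w[OF x(2)] n
      by (intro exI[of _ "xs 1 + window_mat (n' + 1) n' 0 *\<^sub>v xs 2"]) (simp add: xlen_def)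
  qed
qed

lemma decoder_exists:
  assumes j: "j \<in> {1,2,3}" and det: "det (recv_mat N eps a n' j) \<noteq> 0"
  shows "\<exists>G. G \<in> carrier_mat (xlen n' j) n \<and>
    (\<forall>xs. (\<forall>i\<in>{1,2,3}. xs i \<in> carrier_vec (xlen n' i)) \<longrightarrow> G *\<^sub>v Yout N eps a n' j xs = xs j)"
proof -
  let ?A = "Mhat N eps a n 1 j * recv_mat N eps a n' j"
  note R = recv_mat_carrier[OF j]
  have "det (Mhat N eps a n 1 j) \<noteq> 0"
    using Mdiag_nonzero[OF nonzero _ j] by (simp add: Mhat_eq_mat_diag det_mat_diag)
  then have "det ?A \<noteq> 0" using det by (simp add: det_mult[OF Mhat_carrier R])
  moreover have len: "xlen n' j + (n - xlen n' j) = n" using n by (simp add: xlen_def)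
  ultimately obtain G where G: "G \<in> carrier_mat (xlen n' j) n"
    "\<And>x z. x \<in> carrier_vec (xlen n' j) \<Longrightarrow> z \<in> carrier_vec (n - xlen n' j) \<Longrightarrow>
       G *\<^sub>v (?A *\<^sub>v (x @\<^sub>v z)) = x"
    using prefix_recovery[OF mult_carrier_mat[OF Mhat_carrier R]] by blast
  have "G *\<^sub>v Yout N eps a n' j xs = xs j" if xs: "\<forall>i\<in>{1,2,3}. xs i \<in> carrier_vec (xlen n' i)" for xs
  proof -
    obtain z where z: "z \<in> carrier_vec (n - xlen n' j)"
      and Y: "Yout N eps a n' j xs = Mhat N eps a n 1 j *\<^sub>v (recv_mat N eps a n' j *\<^sub>v (xs j @\<^sub>v z))"
      using Yout_factorization[OF j xs] by blast
    have "xs j @\<^sub>v z \<in> carrier_vec n"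
      using append_carrier_vec[OF xs[rule_format, OF j] z] unfolding len .
    then have "Yout N eps a n' j xs = ?A *\<^sub>v (xs j @\<^sub>v z)"
      unfolding Y by (rule assoc_mult_mat_vec[symmetric, OF Mhat_carrier R])
    then show ?thesis using G(2)[OF xs[rule_format, OF j] z] by simp
  qed
  then show ?thesis using G(1) by blast
qed

lemma decodable_if_det_recv_mat_nonzero:
  assumes "\<forall>j\<in>{1,2,3}. det (recv_mat N eps a n' j) \<noteq> 0"
  shows "(\<forall>i\<in>{1,2,3}. \<forall>j\<in>{1,2,3}. invertible_mat (Mhat N eps a n i j)) \<and>
    (\<forall>j\<in>{1,2,3}. \<exists>G. G \<in> carrier_mat (xlen n' j) n \<and>
       (\<forall>xs. (\<forall>i\<in>{1,2,3}. xs i \<in> carrier_vec (xlen n' i)) \<longrightarrow>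
          G *\<^sub>v Yout N eps a n' j xs = xs j))"
proof (intro conjI ballI)
  fix i j :: nat assume "i \<in> {1,2,3}" "j \<in> {1,2,3}"
  then show "invertible_mat (Mhat N eps a n i j)"
    unfolding Mhat_eq_mat_diag using Mdiag_nonzero[OF nonzero] by (intro invertible_mat_diag) blast
next
  fix j :: nat assume j: "j \<in> {1,2,3}"
  show "\<exists>G. G \<in> carrier_mat (xlen n' j) n \<and>
      (\<forall>xs. (\<forall>i\<in>{1,2,3}. xs i \<in> carrier_vec (xlen n' i)) \<longrightarrow> G *\<^sub>v Yout N eps a n' j xs = xs j)"
    using decoder_exists[OF j assms[rule_format, OF j]] .
qed

end

section \<open>Specializing the indeterminate LECs\<close>

lemma specializes_precoder_diags:
  assumes spec: "\<And>i j. i \<in> {1,2,3} \<Longrightarrow> j \<in> {1,2,3} \<Longrightarrow> specializes e (dG i j r) (dE i j r)"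
    and nonzero: "\<And>i j. i \<in> {1,2,3} \<Longrightarrow> j \<in> {1,2,3} \<Longrightarrow> dE i j r \<noteq> 0"
  shows "specializes e (Udiag dG r) (Udiag dE r)" "specializes e (Rdiag dG r) (Rdiag dE r)"
    "specializes e (Sdiag dG r) (Sdiag dE r)"
proof -
  have inv: "specializes e (inverse (dG i j r)) (inverse (dE i j r))"
    if "i \<in> {1,2,3}" "j \<in> {1,2,3}" for i j
    using specializes_inverse[OF spec[OF that] nonzero[OF that]] .
  show "specializes e (Udiag dG r) (Udiag dE r)" "specializes e (Rdiag dG r) (Rdiag dE r)"
    "specializes e (Sdiag dG r) (Sdiag dE r)"
    unfolding Udiag_def Rdiag_def Sdiag_def by (intro specializes_mult spec inv; simp)+
qed

lemma mat_specializes_recv_mat: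
  fixes eps :: "lecvar \<Rightarrow> 'f::field ratfun" and e :: "lecvar \<Rightarrow> 'f alg_closure"
  assumes nzG: "gains_nonzero (Mdiag N eps a) n" and nzE: "gains_nonzero (Mdiag N e b) n"
    and n: "n = 2 * n' + 1"
    and spec: "\<And>i j r. i \<in> {1,2,3} \<Longrightarrow> j \<in> {1,2,3} \<Longrightarrow> r < n \<Longrightarrow>
      specializes e (Mdiag N eps a i j r) (Mdiag N e b i j r)"
    and j: "j \<in> {1,2,3}"
  shows "mat_specializes e (recv_mat N eps a n' j) (recv_mat N e b n' j)"
proof -
  let ?dG = "Mdiag N eps a" and ?dE = "Mdiag N e b"
  have diags: "specializes e (Udiag ?dG r) (Udiag ?dE r)" "specializes e (Rdiag ?dG r) (Rdiag ?dE r)"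
    "specializes e (Sdiag ?dG r) (Sdiag ?dE r)" if "r < n" for r
    using that Mdiag_nonzero[OF nzE] by (intro specializes_precoder_diags spec; simp)+
  have V: "mat_specializes e (V1 N eps a n') (V1 N e b n')"
    "mat_specializes e (V2 N eps a n') (V2 N e b n')"
    "mat_specializes e (V3 N eps a n') (V3 N e b n')"
    unfolding V1_eq[OF nzG n] V1_eq[OF nzE n] V2_eq[OF nzG n] V2_eq[OF nzE n]
      V3_eq[OF nzG n] V3_eq[OF nzE n]
    by (auto intro!: mat_specializesI specializes_mult specializes_power diags)
  have D: "mat_specializes e (minv (Mhat N eps a n 1 k) * Mhat N eps a n l k * B)
      (minv (Mhat N e b n 1 k) * Mhat N e b n l k * B')"
    if "k \<in> {1,2,3}" "l \<in> {1,2,3}" "mat_specializes e B B'" "B' \<in> carrier_mat n n'" for k l B B'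
  proof -
    have "(1::nat) \<in> {1,2,3}" by simp
    note diag_eq = minv_Mhat_mult_Mhat[OF nzG this that(1)] minv_Mhat_mult_Mhat[OF nzE this that(1)]
    have "mat_specializes e (mat_diag n (\<lambda>r. inverse (?dG 1 k r) * ?dG l k r))
        (mat_diag n (\<lambda>r. inverse (?dE 1 k r) * ?dE l k r))"
      using that(1,2) Mdiag_nonzero[OF nzE]
      by (intro mat_specializes_mat_diag specializes_mult specializes_inverse spec) auto
    then show ?thesis
      unfolding diag_eq using that(3,4) by (intro mat_specializes_mult) auto
  qed
  have "n' + 1 + n' = n" "n' + (n' + 1) = n" using n by simp_all
  then show ?thesis
    using j V D V_carriers[OF nzE n] minv_Mhat_mult_Mhat[OF nzE]
    unfolding recv_mat_def n[symmetric]
    by (auto intro!: mat_specializes_hcat)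
qed

lemma ratfun_nonzero_Fract:
  assumes "(x :: 'f::field ratfun) \<noteq> 0"
  shows "\<exists>p q. p \<noteq> 0 \<and> q \<noteq> 0 \<and> x = Fract p q"
proof (cases x)
  case (Fract p q)
  then have "p \<noteq> 0" using assms by (auto simp: fract_collapse)
  then show ?thesis using Fract by blast
qed

lemma exists_specialization_nonzero:
  fixes p :: "'i \<Rightarrow> (lecvar, 'f::field) mpoly" and x :: "'j \<Rightarrow> 'f ratfun"
  assumes "finite I" "\<forall>i\<in>I. p i \<noteq> 0" "finite J" "\<forall>j\<in>J. x j \<noteq> 0"
  shows "\<exists>e. (\<forall>i\<in>I. mpoly_eval e (p i) \<noteq> 0) \<and> (\<forall>j\<in>J. \<exists>y. specializes e (x j) y \<and> y \<noteq> 0)"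
proof -
  have "\<forall>j\<in>J. \<exists>w. fst w \<noteq> 0 \<and> snd w \<noteq> 0 \<and> x j = Fract (fst w) (snd w)"
  proof
    fix j assume "j \<in> J"
    then obtain u v where "u \<noteq> 0" "v \<noteq> 0" "x j = Fract u v"
      using assms(4) ratfun_nonzero_Fract by blast
    then show "\<exists>w. fst w \<noteq> 0 \<and> snd w \<noteq> 0 \<and> x j = Fract (fst w) (snd w)"
      by (intro exI[of _ "(u, v)"]) simp
  qed
  then obtain w
    where w: "\<forall>j\<in>J. fst (w j) \<noteq> 0 \<and> snd (w j) \<noteq> 0 \<and> x j = Fract (fst (w j)) (snd (w j))"
    by (rule bchoice[elim_format]) blast
  let ?P = "p ` I \<union> (\<lambda>j. fst (w j)) ` J \<union> (\<lambda>j. snd (w j)) ` J"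
  have "finite ?P" using assms(1,3) by simp
  moreover have "\<forall>q\<in>?P. q \<noteq> 0" using assms(2) w by (simp add: ball_Un)
  ultimately obtain e where e: "\<forall>q\<in>?P. mpoly_eval e q \<noteq> 0"
    using exists_common_nonroot by (metis (full_types))
  have "\<exists>y. specializes e (x j) y \<and> y \<noteq> 0" if "j \<in> J" for j
  proof -
    have "mpoly_eval e (fst (w j)) \<noteq> 0" "mpoly_eval e (snd (w j)) \<noteq> 0" using e that by blast+
    then show ?thesis
      using specializes_Fract[of e "snd (w j)" "fst (w j)"] w that by auto
  qed
  then show ?thesis using e by blast
qed

theorem theorem4:
  fixes N :: "'v mun" and p m n' :: nat and \<alpha> :: "'f::{field,finite}"
  assumes "prime p" and "card (UNIV :: 'f set) = p ^ m"
    and "finite_dag N"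
    and "\<forall>i\<in>{1,2,3}. min_cut N (src N i) (dst N i) = 1"
    and "\<forall>i\<in>{1,2,3}. \<forall>j\<in>{1,2,3}. i \<noteq> j \<longrightarrow> min_cut N (src N i) (dst N j) \<ge> 1"
    and "n' > 0" and "\<not> p dvd (2 * n' + 1)" and "(2 * n' + 1) dvd (p ^ m - 1)"
    and "\<alpha> ^ (2 * n' + 1) = 1" and "\<forall>k. 0 < k \<and> k < 2 * n' + 1 \<longrightarrow> \<alpha> ^ k \<noteq> 1"
    and "vec_space.rank (2 * n' + 1)
           (hcat (2 * n' + 1) (V1 N lec_indet (rconst \<alpha>) n')
              (minv (Mhat N lec_indet (rconst \<alpha>) (2 * n' + 1) 1 1)
                 * Mhat N lec_indet (rconst \<alpha>) (2 * n' + 1) 2 1 * V2 N lec_indet (rconst \<alpha>) n'))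
         = 2 * n' + 1"
    and "vec_space.rank (2 * n' + 1)
           (hcat (2 * n' + 1)
              (minv (Mhat N lec_indet (rconst \<alpha>) (2 * n' + 1) 1 2)
                 * Mhat N lec_indet (rconst \<alpha>) (2 * n' + 1) 2 2 * V2 N lec_indet (rconst \<alpha>) n')
              (V1 N lec_indet (rconst \<alpha>) n'))
         = 2 * n' + 1"
    and "vec_space.rank (2 * n' + 1)
           (hcat (2 * n' + 1)
              (minv (Mhat N lec_indet (rconst \<alpha>) (2 * n' + 1) 1 3)
                 * Mhat N lec_indet (rconst \<alpha>) (2 * n' + 1) 3 3 * V3 N lec_indet (rconst \<alpha>) n')
              (V1 N lec_indet (rconst \<alpha>) n'))
         = 2 * n' + 1"
  shows "\<exists>eps :: lecvar \<Rightarrow> 'f alg_closure.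
           (\<forall>i\<in>{1,2,3}. \<forall>j\<in>{1,2,3}. invertible_mat (Mhat N eps (to_ac \<alpha>) (2 * n' + 1) i j)) \<and>
           (\<forall>j\<in>{1,2,3}. \<exists>G. G \<in> carrier_mat (xlen n' j) (2 * n' + 1) \<and>
              (\<forall>xs. (\<forall>i\<in>{1,2,3}. xs i \<in> carrier_vec (xlen n' i)) \<longrightarrow>
                   G *\<^sub>v Yout N eps (to_ac \<alpha>) n' j xs = xs j))"
proof -
  (* Of the hypotheses on p, m and \<alpha> only \<alpha> \<noteq> 0 is needed: the others guarantee that \<alpha>
     exists and that the DFT of the model is invertible, which the statement, phrased directly in
     terms of Mhat, does not involve. *)
  let ?n = "2 * n' + 1" and ?I = "{1,2,3} \<times> {1,2,3} \<times> {..<2 * n' + 1} :: (nat \<times> nat \<times> nat) set"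
  let ?gain = "\<lambda>(i, j, r). gain_poly N \<alpha> i j r" and ?G = "recv_mat N lec_indet (rconst \<alpha>) n'"
  have "\<alpha> \<noteq> 0" using assms(9) by (cases "\<alpha> = 0") simp_all
  then have gains: "gain_poly N \<alpha> i j r \<noteq> 0" if "i \<in> {1,2,3}" "j \<in> {1,2,3}" for i j r
    using gain_poly_nonzero[OF assms(3) paths_nonempty_if_min_cuts[OF assms(4,5) that]] by blast
  then have nzG: "gains_nonzero (Mdiag N lec_indet (rconst \<alpha>)) ?n"
    unfolding gains_nonzero_def Mdiag_lec_indet by simp
  have "vec_space.rank ?n (?G j) = ?n" if "j \<in> {1,2,3}" for j
    using that assms(11-13) unfolding recv_mat_def by auto
  then have "\<forall>j\<in>{1,2,3}. det (?G j) \<noteq> 0"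
    using vec_space.det_rank_iff[OF recv_mat_carrier[OF nzG refl]] by blast
  then obtain e where "\<forall>x\<in>?I. mpoly_eval e (?gain x) \<noteq> 0"
    and dets: "\<forall>j\<in>{1,2,3}. \<exists>y. specializes e (det (?G j)) y \<and> y \<noteq> 0"
    using exists_specialization_nonzero[of ?I ?gain "{1,2,3}" "\<lambda>j. det (?G j)"] gains by fastforce
  then have nzE: "gains_nonzero (Mdiag N e (to_ac \<alpha>)) ?n"
    unfolding gains_nonzero_def Mdiag_eq_mpoly_eval by fastforce
  have spec: "specializes e (Mdiag N lec_indet (rconst \<alpha>) i j r) (Mdiag N e (to_ac \<alpha>) i j r)" for i j r
    unfolding Mdiag_lec_indet Mdiag_eq_mpoly_eval by (rule specializes_to_fract)
  have "specializes e (det (?G j)) (det (recv_mat N e (to_ac \<alpha>) n' j))" if "j \<in> {1,2,3}" for j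
    by (intro specializes_det mat_specializes_recv_mat[OF nzG nzE refl spec that])
  then have "\<forall>j\<in>{1,2,3}. det (recv_mat N e (to_ac \<alpha>) n' j) \<noteq> 0"
    using dets specializes_unique by blast
  then show ?thesis using decodable_if_det_recv_mat_nonzero[OF nzE refl] by blast
qed

end
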